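(* Assume the setting described in the context. For every $(\mu,Q)\in\mathcal M_*$, $$I(\mu,Q)=\sup_{\phi,F}I_{\phi,F}(\mu,Q),$$ where the supremum is over all $\phi:V\times\mathcal S_{T_0}\to\mathbb R$ of class $C^1$ in time and all continuous $F:E\times\mathcal S_{T_0}\to\mathbb R$.
   Context: Let $V$ be a finite set, $T_0>0$, $\mathcal S_{T_0}=\mathbb R/T_0\mathbb Z$. For $y,z\in V$, $r(y,z;\cdot)\ge0$ is measurable, $T_0$-periodic, $r(x,x;\cdot)=0$; $E$ is the set of $(y,z)$, $y\ne z$, with $r(y,z;t)>0$ for all $t>0$. Assume (A1) if $r(y,z;t)>0$ for some $t>0$ then for all $t>0$; (A2) $(V,E)$ strongly connected; (A3) $\max_E\sup_{t\in[0,T_0]}r<\infty$, $\min_E\inf_{t\in[0,T_0]}r>0$; (A4) the discontinuity points in $\mathcal S_{T_0}$ of the rates form a Lebesgue-null set. $\mathcal M_*=\mathcal M_{+,T_0}(V\times\mathcal S_{T_0})\times\mathcal M_+(E\times\mathcal S_{T_0})$ (nonnegative measures of total mass $T_0$, resp. finite nonnegative measures). $r(y;t)=\sum_zr(y,z;t)$, $r^F(y,z;t)=r(y,z;t)e^{F(y,z;t)}$, $r^F(y;t)=\sum_zr^F(y,z;t)$; $\mathrm{div}\,Q(\phi)=\sum_y\int\phi(y,s)[\sum_zQ(y,z,ds)-\sum_zQ(z,y,ds)]$; $\hat I_{\phi,F}(\mu,Q)=-\mu(\partial_t\phi)+\mathrm{div}\,Q(\phi)+Q(F)-\mu(r^F-r)$;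 $I_{\phi,F}(\mu,Q)=\hat I_{\phi,F}(\mu,Q)$ if $\mu=\mu_tdt$ with $\mu_t(V)=1$ a.e., and $+\infty$ otherwise. $\Phi(q,p)=q\log\frac qp-(q-p)$ for $q,p>0$, $\Phi(0,p)=p$, $\Phi(q,0)=+\infty$ for $q>0$. $\Lambda$ is the set of $(\mu,Q)\in\mathcal M_*$ with $\mu=\mu_tdt$, $\mu_t(V)=1$ a.e., $Q=Q_tdt$, $\int_0^{T_0}\sum_y\mu_s(y)\partial_sf(y,s)ds=\int_0^{T_0}\sum_y[\sum_zQ_s(y,z)-\sum_zQ_s(z,y)]f(y,s)ds$ for all $f$ $C^1$ in time, and for a.e. $t$, $\mu_t(y)=0\Rightarrow Q_t(y,z)=0$ for all $(y,z)\in E$. $I(\mu,Q)=\int_0^{T_0}\sum_{(y,z)\in E}\Phi(Q_t(y,z),\mu_t(y)r(y,z;t))dt$ if $(\mu,Q)\in\Lambda$ and $+\infty$ otherwise. *)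

theory Defs
  imports "HOL-Analysis.Analysis"
begin

text \<open>Time circle S_T0 = R/T0Z is represented by the fundamental domain [0,T0) with its
Borel sets; functions on the circle are T0-periodic functions on R.\<close>

definition circ :: "real \<Rightarrow> real measure" where
  "circ T0 = restrict_space lborel {0..<T0}"

definition edges :: "('v \<Rightarrow> 'v \<Rightarrow> real \<Rightarrow> real) \<Rightarrow> ('v \<times> 'v) set" where
  "edges r = {(y, z). y \<noteq> z \<and> (\<forall>t>0. r y z t > 0)}"

definition periodic_fun :: "real \<Rightarrow> (real \<Rightarrow> real) \<Rightarrow> bool" where
  "periodic_fun T0 g \<longleftrightarrow> (\<forall>t. g (t + T0) = g t)"

definition C1_time :: "real \<Rightarrow> ('v \<Rightarrow> real \<Rightarrow> real) \<Rightarrow> bool" where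
  "C1_time T0 f \<longleftrightarrow> (\<forall>y. periodic_fun T0 (f y) \<and>
      (\<exists>f'. (\<forall>t. (f y has_real_derivative f' t) (at t)) \<and> continuous_on UNIV f'))"

definition cont_edge :: "real \<Rightarrow> ('v \<times> 'v) set \<Rightarrow> ('v \<Rightarrow> 'v \<Rightarrow> real \<Rightarrow> real) \<Rightarrow> bool" where
  "cont_edge T0 E F \<longleftrightarrow> (\<forall>(y, z)\<in>E. periodic_fun T0 (F y z) \<and> continuous_on UNIV (F y z))"

text \<open>M_*: mu is a nonnegative measure on V x S_T0 of total mass T0, given as a family
of measures on S_T0 indexed by V; Q is a finite nonnegative measure on E x S_T0.\<close>
definition Mstar :: "real \<Rightarrow> ('v::finite \<times> 'v) set \<Rightarrow> ('v \<Rightarrow> real measure)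
     \<Rightarrow> ('v \<Rightarrow> 'v \<Rightarrow> real measure) \<Rightarrow> bool" where
  "Mstar T0 E \<mu> Q \<longleftrightarrow>
     (\<forall>y. sets (\<mu> y) = sets (circ T0) \<and> finite_measure (\<mu> y)) \<and>
     (\<Sum>y\<in>UNIV. measure (\<mu> y) (space (\<mu> y))) = T0 \<and>
     (\<forall>(y, z)\<in>E. sets (Q y z) = sets (circ T0) \<and> finite_measure (Q y z))"

definition mu_density :: "real \<Rightarrow> ('v::finite \<Rightarrow> real measure) \<Rightarrow> ('v \<Rightarrow> real \<Rightarrow> real) \<Rightarrow> bool" where
  "mu_density T0 \<mu> m \<longleftrightarrow>
     (\<forall>y. m y \<in> borel_measurable lborel \<and> (\<forall>t. 0 \<le> m y t) \<and>
          \<mu> y = density (circ T0) (\<lambda>t. ennreal (m y t))) \<and>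
     (AE t in lborel. t \<in> {0..<T0} \<longrightarrow> (\<Sum>y\<in>UNIV. m y t) = 1)"

definition abs_cont_prob :: "real \<Rightarrow> ('v::finite \<Rightarrow> real measure) \<Rightarrow> bool" where
  "abs_cont_prob T0 \<mu> \<longleftrightarrow> (\<exists>m. mu_density T0 \<mu> m)"

definition Lambda_dens :: "real \<Rightarrow> ('v::finite \<times> 'v) set \<Rightarrow> ('v \<Rightarrow> real measure)
     \<Rightarrow> ('v \<Rightarrow> 'v \<Rightarrow> real measure) \<Rightarrow> ('v \<Rightarrow> real \<Rightarrow> real) \<Rightarrow> ('v \<Rightarrow> 'v \<Rightarrow> real \<Rightarrow> real) \<Rightarrow> bool" where
  "Lambda_dens T0 E \<mu> Q m q \<longleftrightarrow>
     mu_density T0 \<mu> m \<and>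
     (\<forall>(y, z)\<in>E. q y z \<in> borel_measurable lborel \<and> (\<forall>t. 0 \<le> q y z t) \<and>
          Q y z = density (circ T0) (\<lambda>t. ennreal (q y z t))) \<and>
     (\<forall>f. C1_time T0 f \<longrightarrow>
        (\<integral>s\<in>{0..<T0}. (\<Sum>y\<in>UNIV. m y s * deriv (f y) s) \<partial>lborel) =
        (\<integral>s\<in>{0..<T0}. (\<Sum>y\<in>UNIV. ((\<Sum>z\<in>{z. (y, z) \<in> E}. q y z s)
                                    - (\<Sum>z\<in>{z. (z, y) \<in> E}. q z y s)) * f y s) \<partial>lborel)) \<and>
     (AE t in lborel. t \<in> {0..<T0} \<longrightarrow> (\<forall>(y, z)\<in>E. m y t = 0 \<longrightarrow> q y z t = 0))"

definition Phi :: "real \<Rightarrow> real \<Rightarrow> ennreal" where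
  "Phi q p = (if q = 0 then ennreal p
              else if p = 0 then \<infinity>
              else ennreal (q * ln (q / p) - (q - p)))"

text \<open>The rate function I(mu,Q); the value does not depend on the choice of densities
(they are unique a.e.).\<close>
definition Irate :: "real \<Rightarrow> ('v::finite \<Rightarrow> 'v \<Rightarrow> real \<Rightarrow> real) \<Rightarrow> ('v \<Rightarrow> real measure)
     \<Rightarrow> ('v \<Rightarrow> 'v \<Rightarrow> real measure) \<Rightarrow> ereal" where
  "Irate T0 r \<mu> Q =
     (if \<exists>m q. Lambda_dens T0 (edges r) \<mu> Q m q then
        (let (m, q) = (SOME (m, q). Lambda_dens T0 (edges r) \<mu> Q m q) in
          enn2ereal (\<integral>\<^sup>+ t\<in>{0..<T0}.
             (\<Sum>(y, z)\<in>edges r. Phi (q y z t) (m y t * r y z t)) \<partial>lborel))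
      else \<infinity>)"

definition Ihat :: "real \<Rightarrow> ('v::finite \<Rightarrow> 'v \<Rightarrow> real \<Rightarrow> real) \<Rightarrow> ('v \<Rightarrow> real \<Rightarrow> real)
     \<Rightarrow> ('v \<Rightarrow> 'v \<Rightarrow> real \<Rightarrow> real) \<Rightarrow> ('v \<Rightarrow> real measure) \<Rightarrow> ('v \<Rightarrow> 'v \<Rightarrow> real measure) \<Rightarrow> real" where
  "Ihat T0 r \<phi> F \<mu> Q =
     - (\<Sum>y\<in>UNIV. \<integral>s. deriv (\<phi> y) s \<partial>(\<mu> y))
     + (\<Sum>(y, z)\<in>edges r. \<integral>s. (\<phi> y s - \<phi> z s) \<partial>(Q y z))
     + (\<Sum>(y, z)\<in>edges r. \<integral>s. F y z s \<partial>(Q y z))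
     - (\<Sum>y\<in>UNIV. \<integral>s. (\<Sum>z\<in>{z. (y, z) \<in> edges r}. r y z s * (exp (F y z s) - 1)) \<partial>(\<mu> y))"

definition Iphi :: "real \<Rightarrow> ('v::finite \<Rightarrow> 'v \<Rightarrow> real \<Rightarrow> real) \<Rightarrow> ('v \<Rightarrow> real \<Rightarrow> real)
     \<Rightarrow> ('v \<Rightarrow> 'v \<Rightarrow> real \<Rightarrow> real) \<Rightarrow> ('v \<Rightarrow> real measure) \<Rightarrow> ('v \<Rightarrow> 'v \<Rightarrow> real measure) \<Rightarrow> ereal" where
  "Iphi T0 r \<phi> F \<mu> Q = (if abs_cont_prob T0 \<mu> then ereal (Ihat T0 r \<phi> F \<mu> Q) else \<infinity>)"

end

theory Submission
  imports Defs
begin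

(* I_{phi,F}(mu,Q) is the sum of a part linear in phi, the continuity equation
   -mu(d_t phi) + div Q(phi) tested against phi, and a part depending only on F, which on
   every edge is the time integral of q F - m r (e^F - 1) when mu = m dt and Q = q dt.
   If (mu,Q) lies in Lambda the first part vanishes, and Phi(q, m r) = sup_x (q x - m r (e^x - 1))
   bounds the second pointwise, so sup <= I.  Conversely the truncated maximisers
   F_n = max (-n) (min n (log (q / (m r))))  make the integrand increase to Phi, and a bounded
   measurable F may be replaced by a continuous periodic one at arbitrarily small cost, because
   continuous periodic functions are dense in L^1 of every finite measure on the circle (inner
   regularity plus Urysohn's lemma); monotone convergence then gives I <= sup.
   Outside Lambda the supremum is infinite: either mu has no density and every I_{phi,F} is
   infinite, or some Q(y,z) charges a mu(y)-null set N and F = K 1_N gains K Q(N) for free,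
   or the continuity equation fails for some phi and multiples of phi make the linear part
   unbounded. *)

section \<open>Functions on the circle\<close>

definition circle_point :: "real \<Rightarrow> real \<Rightarrow> complex" where
  "circle_point T0 t = cis ((2 * pi / T0) * t)"

lemma continuous_on_circle_point: "continuous_on UNIV (circle_point T0)"
  unfolding circle_point_def by (intro continuous_intros)

lemma circle_point_periodic:
  assumes "T0 \<noteq> 0" shows "circle_point T0 (t + T0) = circle_point T0 t"
proof -
  have "(2 * pi / T0) * (t + T0) = (2 * pi / T0) * t + 2 * pi" using assms by (simp add: field_simps)
  then show ?thesis unfolding circle_point_def by (simp add: complex_eq_iff)
qed

lemma inj_on_circle_point:
  assumes "T0 > 0" shows "inj_on (circle_point T0) {0..<T0}"
proof (rule inj_onI)
  fix a b assume a: "a \<in> {0..<T0}" and b: "b \<in> {0..<T0}" and eq: "circle_point T0 a = circle_point T0 b"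
  have "sin ((2 * pi / T0) * a) = sin ((2 * pi / T0) * b) \<and> cos ((2 * pi / T0) * a) = cos ((2 * pi / T0) * b)"
    using eq unfolding circle_point_def by (simp add: complex_eq_iff)
  then obtain k :: int where k: "(2 * pi / T0) * a = (2 * pi / T0) * b + 2 * pi * k"
    using sin_cos_eq_iff by blast
  then have "2 * pi * (a - (b + k * T0)) = 0" using assms by (simp add: field_simps)
  then have ab: "a = b + k * T0" by simp
  have "(-1) * T0 < k * T0" "k * T0 < 1 * T0" using a b ab
    by (simp_all only: atLeastLessThan_iff mult_1 mult_minus1, linarith+)
  then have "-1 < real_of_int k" "real_of_int k < 1"
    using mult_less_cancel_right_pos[OF assms] by blast+
  then have "k = 0" by linarith
  then show "a = b" using ab by simp
qed

lemma space_circ: "space (circ T0) = {0..<T0}"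
  unfolding circ_def by (simp add: space_restrict_space)

lemma sets_circ_iff: "A \<in> sets (circ T0) \<longleftrightarrow> A \<subseteq> {0..<T0} \<and> A \<in> sets borel"
  unfolding circ_def by (subst sets_restrict_space_iff) auto

lemma space_eq_circ: "sets M = sets (circ T0) \<Longrightarrow> space M = {0..<T0}"
  using sets_eq_imp_space_eq space_circ by metis

lemma borel_measurable_circI:
  assumes "sets M = sets (circ T0)" "f \<in> borel_measurable borel"
  shows "f \<in> borel_measurable M"
proof -
  have "f \<in> borel_measurable (circ T0)" unfolding circ_def
    using assms(2) by (intro measurable_restrict_space1) (simp add: measurable_lborel2)
  then show ?thesis by (subst measurable_cong_sets[OF assms(1) refl])
qed

lemma borel_measurable_circ: "f \<in> borel_measurable borel \<Longrightarrow> f \<in> borel_measurable (circ T0)"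
  using borel_measurable_circI[OF refl] .

lemma compact_in_sets_circ: "compact K \<Longrightarrow> K \<subseteq> {0..<T0} \<Longrightarrow> K \<in> sets (circ T0)"
  by (simp add: sets_circ_iff compact_imp_closed borel_closed)

lemma integral_circ: "integral\<^sup>L (circ T0) (f :: real \<Rightarrow> real) = (\<integral>t\<in>{0..<T0}. f t \<partial>lborel)"
  unfolding circ_def set_lebesgue_integral_def using integral_restrict_space[of "{0..<T0}" lborel f] by simp

lemma nn_integral_circ: "integral\<^sup>N (circ T0) f = (\<integral>\<^sup>+t\<in>{0..<T0}. f t \<partial>lborel)"
  unfolding circ_def by (subst nn_integral_restrict_space) auto

lemma finite_measure_circ: "finite_measure (circ T0)"
    unfolding circ_def
  by (cases "0 \<le> T0") (auto intro!: finite_measureI simp: space_restrict_space emeasure_restrict_space)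

lemma inner_regular_circ:
  assumes sM: "sets M = sets (circ T0)" and fin: "finite_measure M"
    and A: "A \<in> sets M" and e: "e > 0"
  obtains K where "compact K" "K \<subseteq> A" "measure M (A - K) < e"
proof -
  interpret finite_measure M by fact
  define M' where "M' = distr M borel (\<lambda>x. x)"
  have idm: "(\<lambda>x. x) \<in> measurable M borel" by (rule borel_measurable_circI[OF sM]) simp
  have em: "emeasure M' X = emeasure M X" if "X \<in> sets borel" "X \<subseteq> space M" for X
    unfolding M'_def using that idm by (subst emeasure_distr) (auto simp: Int_absorb2)
  have "emeasure M' (space M') = emeasure M (space M)"
    unfolding M'_def using idm by (subst emeasure_distr) auto
  then have finM': "emeasure M' (space M') \<noteq> \<infinity>" by simp
  have Ab: "A \<in> sets borel" "A \<subseteq> space M" using A sM sets_circ_iff space_eq_circ[OF sM] by auto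
  have reg: "emeasure M' A = (SUP K \<in> {K. K \<subseteq> A \<and> compact K}. emeasure M' K)"
    by (rule inner_regular[OF _ finM' Ab(1)]) (simp add: M'_def)
  have "\<exists>K. compact K \<and> K \<subseteq> A \<and> measure M (A - K) < e"
  proof (rule ccontr)
    assume nex: "\<not> ?thesis"
    have le: "measure M K \<le> measure M A - e" if "K \<subseteq> A" "compact K" for K
    proof -
      have "K \<in> sets M"
        using that Ab sM compact_in_sets_circ space_eq_circ[OF sM] by auto
      then have "measure M (A - K) = measure M A - measure M K"
        using that by (simp add: finite_measure_Diff A)
      moreover have "\<not> measure M (A - K) < e" using nex that by blast
      ultimately show ?thesis by simp
    qed
    have "(SUP K \<in> {K. K \<subseteq> A \<and> compact K}. emeasure M' K) \<le> ennreal (measure M A - e)"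
    proof (rule SUP_least)
      fix K assume K: "K \<in> {K. K \<subseteq> A \<and> compact K}"
      then have "emeasure M' K = ennreal (measure M K)"
        using em[of K] Ab by (auto simp: emeasure_eq_measure compact_imp_closed borel_closed)
      then show "emeasure M' K \<le> ennreal (measure M A - e)" using le K by (simp add: ennreal_leI)
    qed
    also have "\<dots> < ennreal (measure M A)" using e le[of "{}"] by (simp add: ennreal_lessI)
    also have "\<dots> = emeasure M' A" using em Ab by (simp add: emeasure_eq_measure)
    finally show False using reg by simp
  qed
  then show ?thesis using that by blast
qed

text \<open>Urysohn's lemma on the circle, pulled back along the periodic embedding.\<close>
lemma periodic_Urysohn:
  assumes T0: "T0 > 0" and K: "compact K" "K \<subseteq> {0..<T0}" and L: "compact L" "L \<subseteq> {0..<T0}"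
    and disj: "K \<inter> L = {}"
  obtains h where "continuous_on UNIV h" "periodic_fun T0 h" "\<And>t. h t \<in> {0..1}"
    "\<And>t. t \<in> K \<Longrightarrow> h t = 1" "\<And>t. t \<in> L \<Longrightarrow> h t = 0"
proof -
  have closed_image: "closed (circle_point T0 ` S)" if "compact S" for S
    by (intro compact_imp_closed compact_continuous_image
        continuous_on_subset[OF continuous_on_circle_point] that) auto
  have "circle_point T0 ` K \<inter> circle_point T0 ` L = {}"
    using inj_on_image_Int[OF inj_on_circle_point[OF T0] K(2) L(2)] disj by simp
  then obtain g :: "complex \<Rightarrow> real" where g: "continuous_on UNIV g" "\<And>x. g x \<in> closed_segment 1 0"
    "\<And>x. x \<in> circle_point T0 ` K \<Longrightarrow> g x = 1" "\<And>x. x \<in> circle_point T0 ` L \<Longrightarrow> g x = 0"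
    using Urysohn[OF closed_image[OF K(1)] closed_image[OF L(1)]] by blast
  show ?thesis
  proof
    show "continuous_on UNIV (g \<circ> circle_point T0)"
      by (rule continuous_on_compose[OF continuous_on_circle_point continuous_on_subset[OF g(1)]]) auto
    show "periodic_fun T0 (g \<circ> circle_point T0)"
      unfolding periodic_fun_def using circle_point_periodic T0 by simp
  qed (use g(2-4) in \<open>auto simp: closed_segment_eq_real_ivl\<close>)
qed

section \<open>Density of continuous periodic functions in \<open>L\<^sup>1\<close>\<close>

abbreviation L1_dist :: "'a measure \<Rightarrow> ('a \<Rightarrow> real) \<Rightarrow> ('a \<Rightarrow> real) \<Rightarrow> ennreal" where
  "L1_dist M h f \<equiv> \<integral>\<^sup>+t. ennreal \<bar>h t - f t\<bar> \<partial>M"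

lemma L1_dist_add_le:
  assumes [measurable]: "h1 \<in> borel_measurable M" "h2 \<in> borel_measurable M"
    "f1 \<in> borel_measurable M" "f2 \<in> borel_measurable M"
  shows "L1_dist M (\<lambda>t. h1 t + h2 t) (\<lambda>t. f1 t + f2 t) \<le> L1_dist M h1 f1 + L1_dist M h2 f2"
proof -
  have "L1_dist M (\<lambda>t. h1 t + h2 t) (\<lambda>t. f1 t + f2 t)
      \<le> (\<integral>\<^sup>+t. ennreal \<bar>h1 t - f1 t\<bar> + ennreal \<bar>h2 t - f2 t\<bar> \<partial>M)"
    by (intro nn_integral_mono) (simp add: ennreal_plus[symmetric] del: ennreal_plus ennreal_leI)
  also have "\<dots> = L1_dist M h1 f1 + L1_dist M h2 f2"
    by (intro nn_integral_add) measurable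
  finally show ?thesis .
qed

lemma L1_dist_cmult:
  assumes [measurable]: "h \<in> borel_measurable M" "f \<in> borel_measurable M"
  shows "L1_dist M (\<lambda>t. c * h t) (\<lambda>t. c * f t) = ennreal \<bar>c\<bar> * L1_dist M h f"
proof -
  have "L1_dist M (\<lambda>t. c * h t) (\<lambda>t. c * f t) = (\<integral>\<^sup>+t. ennreal \<bar>c\<bar> * ennreal \<bar>h t - f t\<bar> \<partial>M)"
    by (intro nn_integral_cong) (simp add: ennreal_mult[symmetric] abs_mult[symmetric] right_diff_distrib)
  also have "\<dots> = ennreal \<bar>c\<bar> * L1_dist M h f"
    by (intro nn_integral_cmult) measurable
  finally show ?thesis .
qed

lemma L1_dist_le_uniform:
  assumes [measurable]: "h \<in> borel_measurable M" "s \<in> borel_measurable M"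
    and close: "\<And>t. t \<in> space M \<Longrightarrow> \<bar>f t - s t\<bar> \<le> \<delta>"
  shows "L1_dist M h f \<le> L1_dist M h s + ennreal \<delta> * emeasure M (space M)"
proof -
  have "L1_dist M h f \<le> (\<integral>\<^sup>+t. ennreal \<bar>h t - s t\<bar> + ennreal \<delta> \<partial>M)"
  proof (intro nn_integral_mono)
    fix t assume t: "t \<in> space M"
    have "\<bar>h t - f t\<bar> \<le> \<bar>h t - s t\<bar> + \<delta>" "0 \<le> \<delta>" using close[OF t] by linarith+
    then show "ennreal \<bar>h t - f t\<bar> \<le> ennreal \<bar>h t - s t\<bar> + ennreal \<delta>"
      by (simp add: ennreal_plus[symmetric] del: ennreal_plus)
  qed
  also have "\<dots> = L1_dist M h s + ennreal \<delta> * emeasure M (space M)"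
    by (subst nn_integral_add) auto
  finally show ?thesis .
qed

lemma L1_dist_indicator_le:
  assumes [measurable]: "g \<in> borel_measurable M" "A \<in> sets M" "K \<in> sets M" "L \<in> sets M"
    and "K \<subseteq> A" "L \<subseteq> space M - A"
    and "\<And>t. g t \<in> {0..1}" "\<And>t. t \<in> K \<Longrightarrow> g t = 1" "\<And>t. t \<in> L \<Longrightarrow> g t = 0"
  shows "L1_dist M g (indicator A) \<le> emeasure M (A - K) + emeasure M ((space M - A) - L)"
proof -
  have "L1_dist M g (indicator A) \<le> (\<integral>\<^sup>+t. indicator (A - K) t + indicator ((space M - A) - L) t \<partial>M)"
    using assms(5-) by (intro nn_integral_mono) (auto simp: indicator_def)
  also have "\<dots> = emeasure M (A - K) + emeasure M ((space M - A) - L)"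
    by (subst nn_integral_add) auto
  finally show ?thesis .
qed

lemma ennreal_half_add_half: "e \<ge> 0 \<Longrightarrow> ennreal (e / 2) + ennreal (e / 2) = ennreal e"
  by (simp add: ennreal_plus[symmetric] del: ennreal_plus)

locale circle_measures =
  fixes T0 :: real and Ms :: "real measure set"
  assumes T0_pos: "T0 > 0" and finite_Ms: "finite Ms"
    and sets_Ms: "M \<in> Ms \<Longrightarrow> sets M = sets (circ T0)"
    and finite_measure_Ms: "M \<in> Ms \<Longrightarrow> finite_measure M"
begin

lemma measurable_Ms: "M \<in> Ms \<Longrightarrow> f \<in> borel_measurable borel \<Longrightarrow> f \<in> borel_measurable M"
  using borel_measurable_circI[OF sets_Ms] .

definition approximable :: "(real \<Rightarrow> real) \<Rightarrow> bool" where
  "approximable f \<longleftrightarrow> (\<forall>e>0. \<exists>h. continuous_on UNIV h \<and> periodic_fun T0 h \<and>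
      (\<forall>M\<in>Ms. L1_dist M h f < ennreal e))"

lemma approximableE:
  assumes "approximable f" "e > 0"
  obtains h where "continuous_on UNIV h" "periodic_fun T0 h" "\<And>M. M \<in> Ms \<Longrightarrow> L1_dist M h f < ennreal e"
  using assms unfolding approximable_def by blast

lemma approximable_add:
  assumes "approximable f" "approximable g"
    and [measurable]: "f \<in> borel_measurable borel" "g \<in> borel_measurable borel"
  shows "approximable (\<lambda>t. f t + g t)"
  unfolding approximable_def
proof (intro allI impI)
  fix e :: real assume e: "e > 0"
  obtain h1 where h1: "continuous_on UNIV h1" "periodic_fun T0 h1" "\<And>M. M \<in> Ms \<Longrightarrow> L1_dist M h1 f < ennreal (e/2)"
    by (rule approximableE[OF assms(1), of "e/2"]) (use e in auto)
  obtain h2 where h2: "continuous_on UNIV h2" "periodic_fun T0 h2" "\<And>M. M \<in> Ms \<Longrightarrow> L1_dist M h2 g < ennreal (e/2)"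
    by (rule approximableE[OF assms(2), of "e/2"]) (use e in auto)
  have [measurable]: "h1 \<in> borel_measurable borel" "h2 \<in> borel_measurable borel"
    using h1(1) h2(1) by (auto intro: borel_measurable_continuous_onI)
  show "\<exists>h. continuous_on UNIV h \<and> periodic_fun T0 h \<and> (\<forall>M\<in>Ms. L1_dist M h (\<lambda>t. f t + g t) < ennreal e)"
  proof (intro exI conjI ballI)
    show "continuous_on UNIV (\<lambda>t. h1 t + h2 t)" using h1 h2 by (intro continuous_intros)
    show "periodic_fun T0 (\<lambda>t. h1 t + h2 t)" using h1 h2 by (simp add: periodic_fun_def)
    fix M assume M: "M \<in> Ms"
    have "L1_dist M (\<lambda>t. h1 t + h2 t) (\<lambda>t. f t + g t) \<le> L1_dist M h1 f + L1_dist M h2 g"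
      by (intro L1_dist_add_le measurable_Ms[OF M]) measurable
    also have "\<dots> < ennreal (e/2) + ennreal (e/2)" using h1 h2 M by (intro add_strict_mono) auto
    finally show "L1_dist M (\<lambda>t. h1 t + h2 t) (\<lambda>t. f t + g t) < ennreal e"
      using ennreal_half_add_half e by simp
  qed
qed

lemma approximable_cmult:
  assumes "approximable f" and [measurable]: "f \<in> borel_measurable borel"
  shows "approximable (\<lambda>t. c * f t)"
  unfolding approximable_def
proof (intro allI impI)
  fix e :: real assume e: "e > 0"
  obtain h where h: "continuous_on UNIV h" "periodic_fun T0 h"
    "\<And>M. M \<in> Ms \<Longrightarrow> L1_dist M h f < ennreal (e / (\<bar>c\<bar> + 1))"
    by (rule approximableE[OF assms(1), of "e / (\<bar>c\<bar> + 1)"]) (use e in \<open>auto simp: add_nonneg_pos\<close>)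
  have [measurable]: "h \<in> borel_measurable borel" using h(1) by (rule borel_measurable_continuous_onI)
  show "\<exists>h. continuous_on UNIV h \<and> periodic_fun T0 h \<and> (\<forall>M\<in>Ms. L1_dist M h (\<lambda>t. c * f t) < ennreal e)"
  proof (intro exI conjI ballI)
    show "continuous_on UNIV (\<lambda>t. c * h t)" using h by (intro continuous_intros)
    show "periodic_fun T0 (\<lambda>t. c * h t)" using h by (simp add: periodic_fun_def)
    fix M assume M: "M \<in> Ms"
    have "L1_dist M (\<lambda>t. c * h t) (\<lambda>t. c * f t) = ennreal \<bar>c\<bar> * L1_dist M h f"
      by (intro L1_dist_cmult measurable_Ms[OF M]) measurable
    also have "\<dots> \<le> ennreal (\<bar>c\<bar> + 1) * L1_dist M h f" by (intro mult_right_mono ennreal_leI) auto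
    also have "\<dots> < ennreal (\<bar>c\<bar> + 1) * ennreal (e / (\<bar>c\<bar> + 1))"
      using h(3)[OF M] by (intro ennreal_mult_strict_left_mono) (auto simp del: ennreal_plus)
    also have "\<dots> = ennreal ((\<bar>c\<bar> + 1) * (e / (\<bar>c\<bar> + 1)))"
      using e by (subst ennreal_mult) auto
    also have "\<dots> = ennreal e" by (simp add: add_nonneg_pos)
    finally show "L1_dist M (\<lambda>t. c * h t) (\<lambda>t. c * f t) < ennreal e" .
  qed
qed

lemma approximable_sum:
  assumes "finite I" "\<And>i. i \<in> I \<Longrightarrow> approximable (f i)" "\<And>i. i \<in> I \<Longrightarrow> f i \<in> borel_measurable borel"
  shows "approximable (\<lambda>t. \<Sum>i\<in>I. f i t)"
  using assms
proof (induction I rule: finite_induct)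
  case empty
  show ?case unfolding approximable_def by (auto intro!: exI[of _ "\<lambda>t. 0"] simp: periodic_fun_def)
next
  case (insert i I)
  then have "approximable (\<lambda>t. f i t + (\<Sum>i\<in>I. f i t))"
    by (intro approximable_add borel_measurable_sum) auto
  then show ?case using insert.hyps by simp
qed

lemma approximable_uniform_limit:
  assumes [measurable]: "f \<in> borel_measurable borel"
    and approx: "\<And>\<delta>. \<delta> > 0 \<Longrightarrow>
      \<exists>s. approximable s \<and> s \<in> borel_measurable borel \<and> (\<forall>t\<in>{0..<T0}. \<bar>f t - s t\<bar> \<le> \<delta>)"
  shows "approximable f"
  unfolding approximable_def
proof (intro allI impI)
  fix e :: real assume e: "e > 0"
  define S where "S = (\<Sum>M\<in>Ms. measure M (space M))"
  have S: "measure M (space M) \<le> S" if "M \<in> Ms" for M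
    unfolding S_def using that finite_Ms by (intro member_le_sum) auto
  have S0: "0 \<le> S" unfolding S_def by (simp add: sum_nonneg)
  define \<delta> where "\<delta> = e / (2 * (S + 1))"
  have \<delta>: "\<delta> > 0" using e S0 unfolding \<delta>_def by simp
  have "\<delta> * S < e / 2" using e S0 unfolding \<delta>_def by (simp add: field_simps)
  then have \<delta>M: "\<delta> * measure M (space M) < e / 2" if "M \<in> Ms" for M
    using mult_left_mono[OF S[OF that], of \<delta>] \<delta> by linarith
  obtain s where s: "approximable s" "\<And>t. t \<in> {0..<T0} \<Longrightarrow> \<bar>f t - s t\<bar> \<le> \<delta>"
    and [measurable]: "s \<in> borel_measurable borel"
    using approx[OF \<delta>] by blast
  obtain h where h: "continuous_on UNIV h" "periodic_fun T0 h" "\<And>M. M \<in> Ms \<Longrightarrow> L1_dist M h s < ennreal (e/2)"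
    by (rule approximableE[OF s(1), of "e/2"]) (use e in auto)
  have [measurable]: "h \<in> borel_measurable borel" using h(1) by (rule borel_measurable_continuous_onI)
  show "\<exists>h. continuous_on UNIV h \<and> periodic_fun T0 h \<and> (\<forall>M\<in>Ms. L1_dist M h f < ennreal e)"
  proof (intro exI conjI ballI)
    show "continuous_on UNIV h" "periodic_fun T0 h" by (fact h)+
    fix M assume M: "M \<in> Ms"
    interpret finite_measure M using M by (rule finite_measure_Ms)
    have "L1_dist M h f \<le> L1_dist M h s + ennreal \<delta> * emeasure M (space M)"
      using s(2) space_eq_circ[OF sets_Ms[OF M]] by (intro L1_dist_le_uniform measurable_Ms[OF M]) auto
    also have "ennreal \<delta> * emeasure M (space M) = ennreal (\<delta> * measure M (space M))"
      using \<delta> by (simp add: emeasure_eq_measure ennreal_mult)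
    also have "L1_dist M h s + \<dots> < ennreal (e/2) + ennreal (e/2)"
      using h(3)[OF M] \<delta>M[OF M] e by (intro add_strict_mono ennreal_lessI) auto
    finally show "L1_dist M h f < ennreal e" using ennreal_half_add_half e by simp
  qed
qed

lemma uniform_inner_compact:
  assumes A: "A \<in> sets (circ T0)" and e: "e > 0"
  obtains K where "compact K" "K \<subseteq> A" "\<And>M. M \<in> Ms \<Longrightarrow> measure M (A - K) < e"
proof -
  have "\<exists>K. compact K \<and> K \<subseteq> A \<and> measure M (A - K) < e" if M: "M \<in> Ms" for M
  proof -
    have "A \<in> sets M" using A sets_Ms[OF M] by simp
    from inner_regular_circ[OF sets_Ms[OF M] finite_measure_Ms[OF M] this e] show ?thesis by blast
  qed
  then obtain K where K: "\<And>M. M \<in> Ms \<Longrightarrow> compact (K M) \<and> K M \<subseteq> A \<and> measure M (A - K M) < e"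
    by (metis bchoice)
  show ?thesis
  proof
    show "compact (\<Union>M\<in>Ms. K M)" using K finite_Ms by auto
    show "(\<Union>M\<in>Ms. K M) \<subseteq> A" using K by auto
    fix M assume M: "M \<in> Ms"
    interpret finite_measure M using M by (rule finite_measure_Ms)
    have "K M \<in> sets M" unfolding sets_Ms[OF M]
      by (intro compact_in_sets_circ) (use K[OF M] A in \<open>auto simp: sets_circ_iff\<close>)
    then have "measure M (A - (\<Union>M\<in>Ms. K M)) \<le> measure M (A - K M)"
      using A sets_Ms[OF M] M by (intro finite_measure_mono) auto
    then show "measure M (A - (\<Union>M\<in>Ms. K M)) < e" using K[OF M] by simp
  qed
qed

lemma approximable_indicator:
  assumes A: "A \<in> sets (circ T0)"
  shows "approximable (indicator A)"
  unfolding approximable_def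
proof (intro allI impI)
  fix e :: real assume e: "e > 0"
  have AS: "A \<subseteq> {0..<T0}" using A sets_circ_iff by blast
  have C: "{0..<T0} - A \<in> sets (circ T0)" using A by (metis sets.compl_sets space_circ)
  obtain K where K: "compact K" "K \<subseteq> A" "\<And>M. M \<in> Ms \<Longrightarrow> measure M (A - K) < e/2"
    by (rule uniform_inner_compact[OF A, of "e/2"]) (use e in auto)
  obtain L where L: "compact L" "L \<subseteq> {0..<T0} - A" "\<And>M. M \<in> Ms \<Longrightarrow> measure M (({0..<T0} - A) - L) < e/2"
    by (rule uniform_inner_compact[OF C, of "e/2"]) (use e in auto)
  obtain h where h: "continuous_on UNIV h" "periodic_fun T0 h" "\<And>t. h t \<in> {0..1}"
    "\<And>t. t \<in> K \<Longrightarrow> h t = 1" "\<And>t. t \<in> L \<Longrightarrow> h t = 0"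
    using periodic_Urysohn[OF T0_pos K(1) _ L(1)] K(2) L(2) AS by blast
  show "\<exists>h. continuous_on UNIV h \<and> periodic_fun T0 h \<and> (\<forall>M\<in>Ms. L1_dist M h (indicator A) < ennreal e)"
  proof (intro exI conjI ballI)
    show "continuous_on UNIV h" "periodic_fun T0 h" by (fact h)+
    fix M assume M: "M \<in> Ms"
    interpret finite_measure M using M by (rule finite_measure_Ms)
    have sp: "space M = {0..<T0}" using space_eq_circ[OF sets_Ms[OF M]] .
    have "L1_dist M h (indicator A) \<le> emeasure M (A - K) + emeasure M ((space M - A) - L)"
      using A C K L AS sp sets_Ms[OF M]
      by (intro L1_dist_indicator_le measurable_Ms[OF M] borel_measurable_continuous_onI h)
        (auto intro!: compact_in_sets_circ)
    also have "\<dots> = ennreal (measure M (A - K)) + ennreal (measure M (({0..<T0} - A) - L))"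
      by (simp add: emeasure_eq_measure sp)
    also have "\<dots> < ennreal (e/2) + ennreal (e/2)"
      using K(3)[OF M] L(3)[OF M] e by (intro add_strict_mono ennreal_lessI) auto
    finally show "L1_dist M h (indicator A) < ennreal e" using ennreal_half_add_half e by simp
  qed
qed

text \<open>A bounded measurable function is a uniform limit of step functions with
  finitely many Borel steps.\<close>
lemma approximable_bounded:
  assumes [measurable]: "f \<in> borel_measurable borel" and B: "\<And>t. t \<in> {0..<T0} \<Longrightarrow> \<bar>f t\<bar> \<le> B"
  shows "approximable f"
proof (rule approximable_uniform_limit[OF assms(1)])
  fix \<delta> :: real assume \<delta>: "\<delta> > 0"
  obtain n :: nat where n: "1 / \<delta> < real n" using reals_Archimedean2 by blast
  then have n0: "real n > 0" using \<delta> by (meson dual_order.strict_trans zero_less_divide_1_iff)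
  have rd: "1 / real n \<le> \<delta>" using n n0 \<delta> by (simp add: field_simps)
  define N where "N = \<lceil>real n * B\<rceil> + 1"
  define A where "A k = {t \<in> {0..<T0}. \<lfloor>real n * f t\<rfloor> = k}" for k :: int
  define s where "s t = (\<Sum>k\<in>{-N..N}. (real_of_int k / real n) * indicator (A k) t)" for t
  have Ab[measurable]: "A k \<in> sets borel" for k unfolding A_def by measurable
  have "approximable s"
    unfolding s_def[abs_def] using Ab
    by (intro approximable_sum approximable_cmult approximable_indicator) (auto simp: sets_circ_iff A_def)
  moreover have "s \<in> borel_measurable borel" unfolding s_def by measurable
  moreover have "\<bar>f t - s t\<bar> \<le> \<delta>" if t: "t \<in> {0..<T0}" for t
  proof -
    define x where "x = real n * f t"
    have "\<bar>x\<bar> \<le> real n * B" unfolding x_def using n0 B[OF t] by (simp add: abs_mult)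
    then have x: "\<lfloor>x\<rfloor> \<in> {-N..N}" unfolding N_def by (simp add: abs_le_iff) linarith
    have "s t = (\<Sum>k\<in>{-N..N}. if \<lfloor>x\<rfloor> = k then real_of_int k / real n else 0)"
      unfolding s_def using t by (intro sum.cong) (auto simp: A_def indicator_def x_def)
    also have "\<dots> = real_of_int \<lfloor>x\<rfloor> / real n" using x by (simp add: sum.delta')
    finally have "f t - s t = (x - real_of_int \<lfloor>x\<rfloor>) / real n" using n0 unfolding x_def by (simp add: field_simps)
    moreover have "0 \<le> x - real_of_int \<lfloor>x\<rfloor>" "x - real_of_int \<lfloor>x\<rfloor> \<le> 1" by linarith+
    ultimately show ?thesis using rd n0 by (simp add: divide_right_mono order.trans[OF _ rd])
  qed
  ultimately show "\<exists>s. approximable s \<and> s \<in> borel_measurable borel \<and> (\<forall>t\<in>{0..<T0}. \<bar>f t - s t\<bar> \<le> \<delta>)"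
    by blast
qed

lemma bounded_periodic_approx:
  assumes [measurable]: "f \<in> borel_measurable borel" and B: "\<And>t. t \<in> {0..<T0} \<Longrightarrow> \<bar>f t\<bar> \<le> B"
    and e: "e > 0"
  obtains h where "continuous_on UNIV h" "periodic_fun T0 h" "\<And>t. \<bar>h t\<bar> \<le> B"
    "\<And>M. M \<in> Ms \<Longrightarrow> L1_dist M h f < ennreal e"
proof -
  obtain g where g: "continuous_on UNIV g" "periodic_fun T0 g" "\<And>M. M \<in> Ms \<Longrightarrow> L1_dist M g f < ennreal e"
    using approximable_bounded[OF assms(1) B] e unfolding approximable_def by blast
  define h where "h t = max (- B) (min B (g t))" for t
  have close: "L1_dist M h f \<le> L1_dist M g f" if "M \<in> Ms" for M
  proof (intro nn_integral_mono ennreal_leI)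
    fix t assume "t \<in> space M"
    then have "\<bar>f t\<bar> \<le> B" using B space_eq_circ[OF sets_Ms[OF that]] by auto
    then show "\<bar>h t - f t\<bar> \<le> \<bar>g t - f t\<bar>" unfolding h_def by (auto simp: max_def min_def)
  qed
  show ?thesis
  proof
    show "continuous_on UNIV h" unfolding h_def using g(1) by (intro continuous_intros)
    show "periodic_fun T0 h" using g(2) unfolding h_def periodic_fun_def by simp
    show "\<bar>h t\<bar> \<le> B" for t using B[of 0] T0_pos unfolding h_def by auto
    show "L1_dist M h f < ennreal e" if "M \<in> Ms" for M
      using close[OF that] g(3)[OF that] by (rule le_less_trans)
  qed
qed

end

section \<open>The variational form of \<open>Phi\<close>\<close>

text \<open>\<open>Phi q p\<close> is the supremum over \<open>x\<close> of \<open>Phi_var q p x\<close> (for \<open>q, p \<ge> 0\<close>); pointwise in time,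
  \<open>Q(F) - \<mu>(r\<^sup>F - r)\<close> is the integral of \<open>Phi_var q (m * r) F\<close>.\<close>
definition Phi_var :: "real \<Rightarrow> real \<Rightarrow> real \<Rightarrow> real" where
  "Phi_var q p x = q * x - p * (exp x - 1)"

text \<open>Truncation to \<open>[-n, n]\<close> of the maximiser \<open>ln (q / p)\<close> of \<open>Phi_var q p\<close>, which is
  \<open>+\<infinity>\<close> for \<open>p = 0 < q\<close> and \<open>-\<infinity>\<close> for \<open>q = 0 < p\<close>.\<close>
definition Phi_maximizer :: "nat \<Rightarrow> real \<Rightarrow> real \<Rightarrow> real" where
  "Phi_maximizer n q p = (if p = 0 then (if q = 0 then 0 else real n)
      else if q = 0 then - real n else max (- real n) (min (real n) (ln (q / p))))"

lemma exp_tangent_le: "exp b * (1 + a - b) \<le> exp (a :: real)"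
proof -
  have "exp b * (1 + (a - b)) \<le> exp b * exp (a - b)"
    using exp_ge_add_one_self[of "a - b"] by (intro mult_left_mono) auto
  then show ?thesis by (simp add: exp_diff algebra_simps)
qed

lemma Phi_var_le_Phi:
  assumes "q \<ge> 0" "p \<ge> 0"
  shows "ennreal (Phi_var q p x) \<le> Phi q p"
proof (cases "q = 0 \<or> p = 0")
  case True
  have "- p * (exp x - 1) \<le> p" using assms by (simp add: algebra_simps)
  then show ?thesis using True assms by (auto simp: Phi_def Phi_var_def ennreal_leI)
next
  case False
  then have qp: "q > 0" "p > 0" using assms by auto
  have "p * (exp (ln (q / p)) * (1 + x - ln (q / p))) \<le> p * exp x"
    using qp by (intro mult_left_mono exp_tangent_le) auto
  moreover have "p * (exp (ln (q / p)) * (1 + x - ln (q / p))) = q * (1 + x - ln (q / p))"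
    using qp by simp
  ultimately have "Phi_var q p x \<le> q * ln (q / p) - (q - p)"
    using qp unfolding Phi_var_def by (simp add: algebra_simps)
  then show ?thesis using False unfolding Phi_def by (simp add: ennreal_leI)
qed

lemma Phi_var_mono_below:
  assumes "q > 0" "p > 0" "x1 \<le> x2" "x2 \<le> ln (q / p)"
  shows "Phi_var q p x1 \<le> Phi_var q p x2"
proof -
  have "exp x2 - exp x1 \<le> exp x2 * (x2 - x1)"
    using exp_tangent_le[of x2 x1] by (simp add: algebra_simps)
  also have "\<dots> \<le> (q / p) * (x2 - x1)"
    using assms exp_le_cancel_iff[of x2 "ln (q / p)"] by (intro mult_right_mono) auto
  finally have "p * (exp x2 - exp x1) \<le> p * ((q / p) * (x2 - x1))" using assms by (intro mult_left_mono) auto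
  also have "\<dots> = q * (x2 - x1)" using assms by simp
  finally show ?thesis using assms unfolding Phi_var_def by (simp add: algebra_simps)
qed

lemma Phi_var_mono_above:
  assumes "q > 0" "p > 0" "ln (q / p) \<le> x1" "x1 \<le> x2"
  shows "Phi_var q p x2 \<le> Phi_var q p x1"
proof -
  have "(q / p) * (x2 - x1) \<le> exp x1 * (x2 - x1)"
    using assms exp_le_cancel_iff[of "ln (q / p)" x1] by (intro mult_right_mono) auto
  also have "\<dots> \<le> exp x2 - exp x1"
    using exp_tangent_le[of x1 x2] by (simp add: algebra_simps)
  finally have "p * ((q / p) * (x2 - x1)) \<le> p * (exp x2 - exp x1)" using assms by (intro mult_left_mono) auto
  moreover have "p * ((q / p) * (x2 - x1)) = q * (x2 - x1)" using assms by simp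
  ultimately show ?thesis using assms unfolding Phi_var_def by (simp add: algebra_simps)
qed

lemma Phi_var_maximizer:
  assumes "q \<ge> 0" "p \<ge> 0"
  shows Phi_var_maximizer_nonneg: "0 \<le> Phi_var q p (Phi_maximizer n q p)"
    and Phi_var_maximizer_mono: "Phi_var q p (Phi_maximizer n q p) \<le> Phi_var q p (Phi_maximizer (Suc n) q p)"
proof -
  have "Phi_var q p 0 \<le> Phi_var q p (Phi_maximizer n q p)
    \<and> Phi_var q p (Phi_maximizer n q p) \<le> Phi_var q p (Phi_maximizer (Suc n) q p)"
  proof (cases "q = 0 \<or> p = 0")
    case True
    have "exp (- real (Suc n)) \<le> exp (- real n)" "exp (- real n) \<le> 1" by simp_all
    then show ?thesis using True assms
      by (auto simp: Phi_maximizer_def Phi_var_def algebra_simps intro: mult_left_mono)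
  next
    case False
    then have qp: "q > 0" "p > 0" using assms by auto
    define y where "y = ln (q / p)"
    have fs: "Phi_maximizer k q p = max (- real k) (min (real k) y)" for k
      using False by (simp add: Phi_maximizer_def y_def)
    show ?thesis
    proof (cases "y \<ge> 0")
      case True
      then have "Phi_maximizer k q p = min (real k) y" for k using fs[of k] by simp
      then show ?thesis using True qp by (simp add: Phi_var_mono_below y_def)
    next
      case False
      then have "Phi_maximizer k q p = max (- real k) y" for k using fs[of k] by simp
      then show ?thesis using False qp by (simp add: Phi_var_mono_above y_def)
    qed
  qed
  then show "0 \<le> Phi_var q p (Phi_maximizer n q p)"
    "Phi_var q p (Phi_maximizer n q p) \<le> Phi_var q p (Phi_maximizer (Suc n) q p)"
    by (auto simp: Phi_var_def)
qed

lemma abs_Phi_maximizer_le: "\<bar>Phi_maximizer n q p\<bar> \<le> real n"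
  by (auto simp: Phi_maximizer_def)

lemma Phi_var_maximizer_tendsto:
  assumes q: "q \<ge> 0" and p: "p \<ge> 0"
  shows "(\<lambda>n. ennreal (Phi_var q p (Phi_maximizer n q p))) \<longlonglongrightarrow> Phi q p"
proof (cases "p = 0")
  case pz: True
  show ?thesis
  proof (cases "q = 0")
    case True then show ?thesis using pz by (simp add: Phi_maximizer_def Phi_var_def Phi_def)
  next
    case False
    have "filterlim (\<lambda>n. q * real n) at_top sequentially"
      using False q by (intro filterlim_tendsto_pos_mult_at_top[OF tendsto_const _ filterlim_real_sequentially]) auto
    then show ?thesis using pz False
      by (simp add: Phi_maximizer_def Phi_var_def Phi_def ennreal_tendsto_top_eq_at_top)
  qed
next
  case pn: False
  show ?thesis
  proof (cases "q = 0")
    case True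
    have "exp (-1::real) < exp 0" by (subst exp_less_cancel_iff) simp
    then have "norm (exp (-1::real)) < 1" by simp
    then have "(\<lambda>n. exp (-1::real) ^ n) \<longlonglongrightarrow> 0" by (rule LIMSEQ_power_zero)
    then have "(\<lambda>n. p - p * exp (-1::real) ^ n) \<longlonglongrightarrow> p - p * 0"
      by (rule tendsto_diff[OF tendsto_const tendsto_mult_left])
    moreover have "Phi_var q p (Phi_maximizer n q p) = p - p * exp (-1::real) ^ n" for n
      using True pn exp_of_nat_mult[of n "-1::real"] by (simp add: Phi_maximizer_def Phi_var_def algebra_simps)
    ultimately show ?thesis using True p by (simp add: Phi_def tendsto_ennrealI)
  next
    case qn: False
    have "\<forall>n \<ge> nat \<lceil>\<bar>ln (q / p)\<bar>\<rceil>. ennreal (Phi_var q p (Phi_maximizer n q p)) = Phi q p"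
      using qn pn q p by (auto simp: Phi_maximizer_def Phi_var_def Phi_def algebra_simps)
    then have "eventually (\<lambda>n. ennreal (Phi_var q p (Phi_maximizer n q p)) = Phi q p) sequentially"
      unfolding eventually_sequentially by (rule exI)
    then show ?thesis by (rule tendsto_eventually)
  qed
qed

lemma abs_exp_diff_le:
  fixes a b B :: real
  assumes "\<bar>a\<bar> \<le> B" "\<bar>b\<bar> \<le> B"
  shows "\<bar>exp a - exp b\<bar> \<le> exp B * \<bar>a - b\<bar>"
proof -
  have *: "exp v - exp u \<le> exp B * (v - u)" if "u \<le> v" "v \<le> B" for u v :: real
  proof -
    have "exp v - exp u \<le> exp v * (v - u)" using exp_tangent_le[of v u] by (simp add: algebra_simps)
    also have "\<dots> \<le> exp B * (v - u)" using that by (intro mult_right_mono) auto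
    finally show ?thesis .
  qed
  show ?thesis
  proof (cases "a \<le> b")
    case True
    then show ?thesis using *[of a b] assms by (simp add: abs_le_iff)
  next
    case False
    then show ?thesis using *[of b a] assms by (simp add: abs_le_iff)
  qed
qed

lemma abs_exp_minus_one_le:
  assumes "(x :: real) \<le> B" shows "\<bar>exp x - 1\<bar> \<le> exp B + 1"
proof -
  have "exp x \<le> exp B" using assms by simp
  moreover have "0 < exp x" "0 < exp B" by simp_all
  ultimately show ?thesis unfolding abs_le_iff by linarith
qed

lemma finite_measure_integrable_bounded:
  fixes f :: "'a \<Rightarrow> real"
  assumes "finite_measure M" "f \<in> borel_measurable M" "\<And>t. t \<in> space M \<Longrightarrow> \<bar>f t\<bar> \<le> B"
  shows "integrable M f"
  using assms by (intro finite_measure.integrable_const_bound[where B=B]) (auto intro: AE_I2)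

lemma integrable_mult_bounded:
  fixes m g :: "'a \<Rightarrow> real"
  assumes "integrable M m" "g \<in> borel_measurable M" "\<And>t. t \<in> space M \<Longrightarrow> \<bar>g t\<bar> \<le> B"
  shows "integrable M (\<lambda>t. m t * g t)"
proof (rule Bochner_Integration.integrable_bound[where f="\<lambda>t. \<bar>B\<bar> * m t"])
  show "integrable M (\<lambda>t. \<bar>B\<bar> * m t)" using assms(1) by simp
  show "(\<lambda>t. m t * g t) \<in> borel_measurable M" using assms(1,2) by measurable
  have "\<bar>g t\<bar> * \<bar>m t\<bar> \<le> \<bar>B\<bar> * \<bar>m t\<bar>" if "t \<in> space M" for t
    using assms(3)[OF that] by (intro mult_right_mono) auto
  then show "AE t in M. norm (m t * g t) \<le> norm (\<bar>B\<bar> * m t)"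
    by (intro AE_I2) (simp add: abs_mult mult.commute)
qed

lemma integrable_density_finite:
  assumes "finite_measure (density M (\<lambda>t. ennreal (f t)))"
    and f: "f \<in> borel_measurable M" and "\<And>t. 0 \<le> f t"
  shows "integrable M f"
proof (rule integrableI_bounded)
  have "(\<integral>\<^sup>+t. ennreal (norm (f t)) \<partial>M) = (\<integral>\<^sup>+t. ennreal (f t) * indicator (space M) t \<partial>M)"
    using assms(3) by (intro nn_integral_cong) auto
  also have "\<dots> = emeasure (density M (\<lambda>t. ennreal (f t))) (space (density M (\<lambda>t. ennreal (f t))))"
    using f by (simp add: emeasure_density)
  finally show "(\<integral>\<^sup>+t. ennreal (norm (f t)) \<partial>M) < \<infinity>"
    using finite_measure.emeasure_finite[OF assms(1)] by (simp add: less_top)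
qed (fact f)

lemma integral_diff_le_integral_abs_diff:
  fixes f g :: "'a \<Rightarrow> real"
  assumes "integrable M f" "integrable M g"
  shows "integral\<^sup>L M f - integral\<^sup>L M g \<le> (\<integral>t. \<bar>f t - g t\<bar> \<partial>M)"
  using assms integral_norm_bound[of M "\<lambda>t. f t - g t"] by simp

lemma integral_less_of_nn_integral_less:
  assumes "integrable M f" "\<And>t. 0 \<le> f t" "(\<integral>\<^sup>+t. ennreal (f t) \<partial>M) < ennreal \<eta>"
  shows "(\<integral>t. f t \<partial>M) < \<eta>"
  using assms by (simp add: nn_integral_eq_integral ennreal_less_iff)

lemma integral_le_nn_integral:
  fixes f :: "'a \<Rightarrow> real"
  assumes "integrable M f"
  shows "ereal (integral\<^sup>L M f) \<le> enn2ereal (\<integral>\<^sup>+t. ennreal (f t) \<partial>M)"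
proof -
  have i: "integrable M (\<lambda>t. max 0 (f t))" using assms by auto
  have "integral\<^sup>L M f \<le> (\<integral>t. max 0 (f t) \<partial>M)"
    using assms i by (intro Bochner_Integration.integral_mono) auto
  moreover have "(\<integral>\<^sup>+t. ennreal (f t) \<partial>M) = ennreal (\<integral>t. max 0 (f t) \<partial>M)"
    using i by (subst nn_integral_eq_integral[symmetric]) (auto simp: ennreal_max_0)
  ultimately show ?thesis by (simp add: enn2ereal_ennreal)
qed

lemma ennreal_sum_le_sum_ennreal:
  fixes g :: "'a \<Rightarrow> real"
  assumes "finite I"
  shows "ennreal (\<Sum>i\<in>I. g i) \<le> (\<Sum>i\<in>I. ennreal (g i))"
proof -
  have "ennreal (\<Sum>i\<in>I. g i) \<le> ennreal (\<Sum>i\<in>I. max 0 (g i))"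
    by (intro ennreal_leI sum_mono) auto
  also have "\<dots> = (\<Sum>i\<in>I. ennreal (max 0 (g i)))" by (rule sum_ennreal[symmetric]) auto
  also have "\<dots> = (\<Sum>i\<in>I. ennreal (g i))" by (simp add: ennreal_max_0)
  finally show ?thesis .
qed

lemma continuous_bounded_on_period:
  assumes "continuous_on UNIV (g :: real \<Rightarrow> real)"
  obtains B where "\<And>t. t \<in> {0..<T0} \<Longrightarrow> \<bar>g t\<bar> \<le> B"
proof -
  have "compact (g ` {0..T0})"
    by (intro compact_continuous_image continuous_on_subset[OF assms]) auto
  then obtain B where "\<forall>x\<in>g ` {0..T0}. norm x \<le> B" using compact_imp_bounded bounded_iff by metis
  then show ?thesis by (intro that[of B]) auto
qed

lemma sum_out_edges:
  fixes E :: "('v::finite \<times> 'v) set"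
  shows "(\<Sum>y\<in>UNIV. \<Sum>z\<in>{z. (y, z) \<in> E}. h y z) = (\<Sum>(y, z)\<in>E. h y z)"
proof -
  have "Sigma UNIV (\<lambda>y. {z. (y, z) \<in> E}) = E" by auto
  then show ?thesis by (subst sum.Sigma) auto
qed

lemma sum_in_edges:
  fixes E :: "('v::finite \<times> 'v) set"
  shows "(\<Sum>y\<in>UNIV. \<Sum>z\<in>{z. (z, y) \<in> E}. h y z) = (\<Sum>(z, y)\<in>E. h y z)"
proof -
  have "(\<Sum>y\<in>UNIV. \<Sum>z\<in>{z. (z, y) \<in> E}. h y z) = (\<Sum>(y, z)\<in>Sigma UNIV (\<lambda>y. {z. (z, y) \<in> E}). h y z)"
    by (subst sum.Sigma) auto
  also have "\<dots> = (\<Sum>(z, y)\<in>E. h y z)"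
    by (rule sum.reindex_bij_witness[where i="\<lambda>(z, y). (y, z)" and j="\<lambda>(y, z). (z, y)"]) auto
  finally show ?thesis .
qed

lemma sum_edges_gradient_eq_divergence:
  fixes E :: "('v::finite \<times> 'v) set" and q :: "'v \<Rightarrow> 'v \<Rightarrow> real" and \<phi> :: "'v \<Rightarrow> real"
  shows "(\<Sum>(y, z)\<in>E. q y z * (\<phi> y - \<phi> z)) =
    (\<Sum>y\<in>UNIV. ((\<Sum>z\<in>{z. (y, z) \<in> E}. q y z) - (\<Sum>z\<in>{z. (z, y) \<in> E}. q z y)) * \<phi> y)"
proof -
  have "(\<Sum>y\<in>UNIV. ((\<Sum>z\<in>{z. (y, z) \<in> E}. q y z) - (\<Sum>z\<in>{z. (z, y) \<in> E}. q z y)) * \<phi> y)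
      = (\<Sum>y\<in>UNIV. \<Sum>z\<in>{z. (y, z) \<in> E}. q y z * \<phi> y) - (\<Sum>y\<in>UNIV. \<Sum>z\<in>{z. (z, y) \<in> E}. q z y * \<phi> y)"
  proof -
    have "((\<Sum>z\<in>{z. (y, z) \<in> E}. q y z) - (\<Sum>z\<in>{z. (z, y) \<in> E}. q z y)) * \<phi> y
       = (\<Sum>z\<in>{z. (y, z) \<in> E}. q y z * \<phi> y) - (\<Sum>z\<in>{z. (z, y) \<in> E}. q z y * \<phi> y)" for y
      by (simp add: left_diff_distrib sum_distrib_right)
    then show ?thesis by (simp only: sum_subtractf)
  qed
  also have "\<dots> = (\<Sum>(y, z)\<in>E. q y z * \<phi> y) - (\<Sum>(z, y)\<in>E. q z y * \<phi> y)"
    by (simp only: sum_out_edges sum_in_edges)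
  also have "\<dots> = (\<Sum>(y, z)\<in>E. q y z * (\<phi> y - \<phi> z))"
    by (simp add: right_diff_distrib sum_subtractf case_prod_unfold)
  finally show ?thesis by simp
qed

lemma C1_timeE:
  assumes "C1_time T0 \<phi>"
  obtains "continuous_on UNIV (\<phi> y)" "continuous_on UNIV (deriv (\<phi> y))"
    "\<And>t. (\<phi> y has_real_derivative deriv (\<phi> y) t) (at t)"
proof -
  obtain f' where f': "\<And>t. (\<phi> y has_real_derivative f' t) (at t)" "continuous_on UNIV f'"
    using assms unfolding C1_time_def by blast
  then have "deriv (\<phi> y) = f'" using DERIV_imp_deriv by blast
  moreover have "continuous_on UNIV (\<phi> y)"
    using f'(1) by (intro DERIV_continuous_on) (auto intro: has_field_derivative_at_within)
  ultimately show ?thesis using that f' by simp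
qed

lemma C1_time_zero: "C1_time T0 (\<lambda>y t. 0)"
  unfolding C1_time_def periodic_fun_def by (auto intro: DERIV_const)

lemma C1_time_cmult:
  assumes "C1_time T0 \<phi>"
  shows "C1_time T0 (\<lambda>y t. c * \<phi> y t)"
  unfolding C1_time_def
proof (intro allI conjI)
  fix y
  show "periodic_fun T0 (\<lambda>t. c * \<phi> y t)" using assms unfolding C1_time_def periodic_fun_def by simp
  obtain f' where f': "\<forall>t. (\<phi> y has_real_derivative f' t) (at t)" "continuous_on UNIV f'"
    using assms unfolding C1_time_def by blast
  show "\<exists>f'. (\<forall>t. ((\<lambda>t. c * \<phi> y t) has_real_derivative f' t) (at t)) \<and> continuous_on UNIV f'"
    using f' by (intro exI[of _ "\<lambda>t. c * f' t"] conjI allI DERIV_cmult continuous_intros) auto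
qed

lemma deriv_cmult_C1_time:
  assumes "C1_time T0 \<phi>"
  shows "deriv (\<lambda>t. c * \<phi> y t) s = c * deriv (\<phi> y) s"
  using C1_timeE[OF assms, of y] by (metis DERIV_cmult DERIV_imp_deriv)

section \<open>The variational formula\<close>

locale rate_setting =
  fixes T0 :: real and r :: "'v::finite \<Rightarrow> 'v \<Rightarrow> real \<Rightarrow> real"
    and \<mu> :: "'v \<Rightarrow> real measure" and Q :: "'v \<Rightarrow> 'v \<Rightarrow> real measure" and C :: real
  assumes T0_pos: "T0 > 0" and r_nonneg: "\<And>y z t. r y z t \<ge> 0"
    and r_measurable: "\<And>y z. r y z \<in> borel_measurable borel"
    and r_le: "\<And>y z t. (y, z) \<in> edges r \<Longrightarrow> t \<in> {0..<T0} \<Longrightarrow> r y z t \<le> C"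
    and C_nonneg: "C \<ge> 0"
    and Mstar: "Mstar T0 (edges r) \<mu> Q"
begin

abbreviation E :: "('v \<times> 'v) set" where "E \<equiv> edges r"

lemma finite_E: "finite E"
  by simp

lemma sets_mu: "sets (\<mu> y) = sets (circ T0)" and finite_measure_mu: "finite_measure (\<mu> y)"
  using Mstar unfolding Mstar_def by auto

lemma sets_Q: "(y, z) \<in> E \<Longrightarrow> sets (Q y z) = sets (circ T0)"
  and finite_measure_Q: "(y, z) \<in> E \<Longrightarrow> finite_measure (Q y z)"
  using Mstar unfolding Mstar_def by auto

lemma space_mu: "space (\<mu> y) = {0..<T0}"
  using space_eq_circ[OF sets_mu] .

lemma space_Q: "(y, z) \<in> E \<Longrightarrow> space (Q y z) = {0..<T0}"
  using space_eq_circ[OF sets_Q] .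

definition continuity_residual :: "('v \<Rightarrow> real \<Rightarrow> real) \<Rightarrow> real" where
  "continuity_residual \<phi> =
     - (\<Sum>y\<in>UNIV. \<integral>s. deriv (\<phi> y) s \<partial>(\<mu> y)) + (\<Sum>(y, z)\<in>E. \<integral>s. (\<phi> y s - \<phi> z s) \<partial>(Q y z))"

definition edge_jump :: "'v \<Rightarrow> 'v \<Rightarrow> (real \<Rightarrow> real) \<Rightarrow> real" where
  "edge_jump y z f = (\<integral>s. f s \<partial>(Q y z)) - (\<integral>s. r y z s * (exp (f s) - 1) \<partial>(\<mu> y))"

definition jump_term :: "('v \<Rightarrow> 'v \<Rightarrow> real \<Rightarrow> real) \<Rightarrow> real" where
  "jump_term F = (\<Sum>(y, z)\<in>E. \<integral>s. F y z s \<partial>(Q y z))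
     - (\<Sum>y\<in>UNIV. \<integral>s. (\<Sum>z\<in>{z. (y, z) \<in> E}. r y z s * (exp (F y z s) - 1)) \<partial>(\<mu> y))"

lemma Ihat_eq: "Ihat T0 r \<phi> F \<mu> Q = continuity_residual \<phi> + jump_term F"
  unfolding Ihat_def continuity_residual_def jump_term_def by simp

lemma continuity_residual_cmult:
  assumes "C1_time T0 \<phi>"
  shows "continuity_residual (\<lambda>y t. c * \<phi> y t) = c * continuity_residual \<phi>"
proof -
  have "(\<integral>s. (c * \<phi> y s - c * \<phi> z s) \<partial>Q y z) = c * (\<integral>s. (\<phi> y s - \<phi> z s) \<partial>Q y z)" for y z
    by (simp add: right_diff_distrib[symmetric])
  then show ?thesis unfolding continuity_residual_def deriv_cmult_C1_time[OF assms]
    by (simp add: case_prod_unfold sum_distrib_left[symmetric] right_diff_distrib)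
qed

lemma integrable_jump_integrand:
  assumes e: "(y, z) \<in> E" and [measurable]: "f \<in> borel_measurable borel"
    and f: "\<And>t. t \<in> {0..<T0} \<Longrightarrow> \<bar>f t\<bar> \<le> Bd"
  shows "integrable (\<mu> y) (\<lambda>s. r y z s * (exp (f s) - 1))"
proof (rule finite_measure_integrable_bounded[OF finite_measure_mu])
  note [measurable] = r_measurable[of y z]
  show "(\<lambda>s. r y z s * (exp (f s) - 1)) \<in> borel_measurable (\<mu> y)"
    by (intro borel_measurable_circI[OF sets_mu]) measurable
  fix t assume "t \<in> space (\<mu> y)"
  then have t: "t \<in> {0..<T0}" using space_mu by simp
  have "\<bar>r y z t * (exp (f t) - 1)\<bar> = r y z t * \<bar>exp (f t) - 1\<bar>" using r_nonneg by (simp add: abs_mult)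
  also have "\<dots> \<le> C * (exp Bd + 1)"
    using r_le[OF e t] r_nonneg abs_exp_minus_one_le[of "f t" Bd] f[OF t] C_nonneg by (intro mult_mono) auto
  finally show "\<bar>r y z t * (exp (f t) - 1)\<bar> \<le> C * (exp Bd + 1)" .
qed

lemma jump_term_eq_sum_edges:
  assumes "\<And>y z. (y, z) \<in> E \<Longrightarrow> F y z \<in> borel_measurable borel"
    "\<And>y z t. (y, z) \<in> E \<Longrightarrow> t \<in> {0..<T0} \<Longrightarrow> \<bar>F y z t\<bar> \<le> Bd"
  shows "jump_term F = (\<Sum>(y, z)\<in>E. edge_jump y z (F y z))"
proof -
  have "(\<integral>s. (\<Sum>z\<in>{z. (y, z) \<in> E}. r y z s * (exp (F y z s) - 1)) \<partial>(\<mu> y))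
      = (\<Sum>z\<in>{z. (y, z) \<in> E}. \<integral>s. r y z s * (exp (F y z s) - 1) \<partial>(\<mu> y))" for y
    using assms by (intro Bochner_Integration.integral_sum integrable_jump_integrand[where Bd=Bd]) auto
  then show ?thesis unfolding jump_term_def edge_jump_def
    by (simp add: sum_out_edges[where h="\<lambda>y z. \<integral>s. r y z s * (exp (F y z s) - 1) \<partial>(\<mu> y)"]
        sum_subtractf[symmetric] case_prod_unfold)
qed

lemma edge_jump_diff_le:
  assumes e: "(y, z) \<in> E" and [measurable]: "f \<in> borel_measurable borel" "g \<in> borel_measurable borel"
    and bounded: "\<And>t. t \<in> {0..<T0} \<Longrightarrow> \<bar>f t\<bar> \<le> Bd" "\<And>t. t \<in> {0..<T0} \<Longrightarrow> \<bar>g t\<bar> \<le> Bd"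
  shows "edge_jump y z f - edge_jump y z g
    \<le> (\<integral>s. \<bar>g s - f s\<bar> \<partial>(Q y z)) + C * exp Bd * (\<integral>s. \<bar>g s - f s\<bar> \<partial>(\<mu> y))"
proof -
  have integrable_Q: "integrable (Q y z) h" if [measurable]: "h \<in> borel_measurable borel"
    and "\<And>t. t \<in> {0..<T0} \<Longrightarrow> \<bar>h t\<bar> \<le> Bd" for h
    using that space_Q[OF e]
    by (intro finite_measure_integrable_bounded[OF finite_measure_Q[OF e]] borel_measurable_circI[OF sets_Q[OF e]]) auto
  have "(\<integral>s. f s \<partial>(Q y z)) - (\<integral>s. g s \<partial>(Q y z)) \<le> (\<integral>s. \<bar>f s - g s\<bar> \<partial>(Q y z))"
    using bounded by (intro integral_diff_le_integral_abs_diff integrable_Q) auto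
  moreover have "(\<integral>s. r y z s * (exp (g s) - 1) \<partial>(\<mu> y)) - (\<integral>s. r y z s * (exp (f s) - 1) \<partial>(\<mu> y))
      \<le> (\<integral>s. \<bar>r y z s * (exp (g s) - 1) - r y z s * (exp (f s) - 1)\<bar> \<partial>(\<mu> y))"
    using bounded by (intro integral_diff_le_integral_abs_diff integrable_jump_integrand[OF e]) auto
  moreover have "\<dots> \<le> (\<integral>s. C * exp Bd * \<bar>g s - f s\<bar> \<partial>(\<mu> y))"
  proof (rule integral_mono)
    show "integrable (\<mu> y) (\<lambda>s. \<bar>r y z s * (exp (g s) - 1) - r y z s * (exp (f s) - 1)\<bar>)"
      using bounded by (intro integrable_abs Bochner_Integration.integrable_diff integrable_jump_integrand[OF e]) auto
    show "integrable (\<mu> y) (\<lambda>s. C * exp Bd * \<bar>g s - f s\<bar>)"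
      using bounded space_mu[of y]
      by (intro integrable_mult_right finite_measure_integrable_bounded[OF finite_measure_mu, where B="2 * Bd"]
          borel_measurable_circI[OF sets_mu]) (measurable, fastforce)
    fix t assume "t \<in> space (\<mu> y)"
    then have t: "t \<in> {0..<T0}" using space_mu by simp
    have "\<bar>r y z t * (exp (g t) - 1) - r y z t * (exp (f t) - 1)\<bar> = r y z t * \<bar>exp (g t) - exp (f t)\<bar>"
      using r_nonneg[of y z t] by (simp add: abs_mult right_diff_distrib[symmetric])
    also have "\<dots> \<le> C * (exp Bd * \<bar>g t - f t\<bar>)"
      using r_le[OF e t] r_nonneg abs_exp_diff_le[OF bounded(2)[OF t] bounded(1)[OF t]] C_nonneg
      by (intro mult_mono) auto
    finally show "\<bar>r y z t * (exp (g t) - 1) - r y z t * (exp (f t) - 1)\<bar> \<le> C * exp Bd * \<bar>g t - f t\<bar>"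
      by (simp add: mult.assoc)
  qed
  ultimately show ?thesis unfolding edge_jump_def by (simp add: abs_minus_commute)
qed

abbreviation test_pairs :: "(('v \<Rightarrow> real \<Rightarrow> real) \<times> ('v \<Rightarrow> 'v \<Rightarrow> real \<Rightarrow> real)) set" where
  "test_pairs \<equiv> {(\<phi>, F). C1_time T0 \<phi> \<and> cont_edge T0 E F}"

abbreviation I_sup :: ereal where
  "I_sup \<equiv> SUP (\<phi>, F) \<in> test_pairs. Iphi T0 r \<phi> F \<mu> Q"

lemma Iphi_le_I_sup: "C1_time T0 \<phi> \<Longrightarrow> cont_edge T0 E F \<Longrightarrow> Iphi T0 r \<phi> F \<mu> Q \<le> I_sup"
  by (rule SUP_upper2[of "(\<phi>, F)"]) auto

lemma I_sup_nonneg: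
  assumes "abs_cont_prob T0 \<mu>" shows "0 \<le> I_sup"
proof -
  have "Iphi T0 r (\<lambda>y t. 0) (\<lambda>y z t. 0) \<mu> Q = 0"
    using assms by (simp add: Iphi_def Ihat_eq continuity_residual_def jump_term_def zero_ereal_def)
  then show ?thesis
    using Iphi_le_I_sup[OF C1_time_zero, of "\<lambda>y z t. 0"] by (simp add: cont_edge_def periodic_fun_def)
qed

lemma edge_jump_continuous_approx:
  assumes e: "(y, z) \<in> E" and [measurable]: "f \<in> borel_measurable borel"
    and f: "\<And>t. t \<in> {0..<T0} \<Longrightarrow> \<bar>f t\<bar> \<le> Bd" and \<eta>: "\<eta> > 0"
  obtains g where "continuous_on UNIV g" "periodic_fun T0 g" "\<And>t. \<bar>g t\<bar> \<le> Bd"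
    "edge_jump y z f \<le> edge_jump y z g + \<eta> * (1 + C * exp Bd)"
proof -
  have Ms: "sets M = sets (circ T0) \<and> finite_measure M" if "M \<in> {Q y z, \<mu> y}" for M
    using that sets_Q[OF e] sets_mu[of y] finite_measure_Q[OF e] finite_measure_mu[of y] by auto
  interpret circle_measures T0 "{Q y z, \<mu> y}"
    by (rule circle_measures.intro) (use T0_pos Ms in auto)
  obtain g where g: "continuous_on UNIV g" "periodic_fun T0 g" "\<And>t. \<bar>g t\<bar> \<le> Bd"
      "\<And>M. M \<in> {Q y z, \<mu> y} \<Longrightarrow> L1_dist M g f < ennreal \<eta>"
    by (rule bounded_periodic_approx[OF assms(2) f \<eta>]) auto
  have [measurable]: "g \<in> borel_measurable borel" using g(1) by (rule borel_measurable_continuous_onI)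
  have small: "(\<integral>t. \<bar>g t - f t\<bar> \<partial>M) < \<eta>" if M: "M \<in> {Q y z, \<mu> y}" for M
  proof (rule integral_less_of_nn_integral_less[OF _ _ g(4)[OF M]])
    show "integrable M (\<lambda>t. \<bar>g t - f t\<bar>)"
    proof (rule finite_measure_integrable_bounded[where B="2 * Bd"])
      show "finite_measure M" using M by (rule finite_measure_Ms)
      show "(\<lambda>t. \<bar>g t - f t\<bar>) \<in> borel_measurable M" by (rule measurable_Ms[OF M]) measurable
      fix t assume "t \<in> space M"
      then have "t \<in> {0..<T0}" using space_eq_circ[OF sets_Ms[OF M]] by simp
      then show "\<bar>\<bar>g t - f t\<bar>\<bar> \<le> 2 * Bd" using g(3)[of t] f[of t] by simp
    qed
  qed simp
  have "edge_jump y z f - edge_jump y z g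
      \<le> (\<integral>s. \<bar>g s - f s\<bar> \<partial>(Q y z)) + C * exp Bd * (\<integral>s. \<bar>g s - f s\<bar> \<partial>(\<mu> y))"
    using f g(3) by (intro edge_jump_diff_le[OF e]) auto
  also have "\<dots> \<le> \<eta> + C * exp Bd * \<eta>"
    using small C_nonneg by (intro add_mono mult_left_mono) (auto intro: less_imp_le)
  finally have "edge_jump y z f \<le> edge_jump y z g + \<eta> * (1 + C * exp Bd)"
    by (simp add: algebra_simps)
  then show ?thesis using that g(1-3) by blast
qed

lemma jump_term_continuous_approx:
  assumes F: "\<And>y z. (y, z) \<in> E \<Longrightarrow> F y z \<in> borel_measurable borel"
    "\<And>y z t. (y, z) \<in> E \<Longrightarrow> t \<in> {0..<T0} \<Longrightarrow> \<bar>F y z t\<bar> \<le> Bd"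
    and \<epsilon>: "\<epsilon> > 0"
  obtains G where "cont_edge T0 E G" "jump_term F \<le> jump_term G + \<epsilon>"
proof -
  define k where "k = 1 + C * exp Bd"
  have k: "k > 0" unfolding k_def using C_nonneg by (simp add: add_pos_nonneg)
  define \<eta> where "\<eta> = \<epsilon> / ((card E + 1) * k)"
  have \<eta>: "\<eta> > 0" unfolding \<eta>_def using \<epsilon> k by simp
  define close where "close e g \<longleftrightarrow> continuous_on UNIV g \<and> periodic_fun T0 g \<and> (\<forall>t. \<bar>g t\<bar> \<le> Bd) \<and>
      edge_jump (fst e) (snd e) (F (fst e) (snd e)) \<le> edge_jump (fst e) (snd e) g + \<eta> * k" for e g
  have "\<exists>g. close (y, z) g" if e: "(y, z) \<in> E" for y z
    by (rule edge_jump_continuous_approx[OF e F(1)[OF e] F(2)[OF e] \<eta>]) (auto simp: close_def k_def)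
  then have "\<forall>e. \<exists>g. e \<in> E \<longrightarrow> close e g" by auto
  from choice[OF this] obtain G' where G': "\<And>e. e \<in> E \<Longrightarrow> close e (G' e)" by blast
  define G where "G y z = G' (y, z)" for y z
  have G: "close (y, z) (G y z)" if "(y, z) \<in> E" for y z unfolding G_def using G'[OF that] .
  have "jump_term F - jump_term G = (\<Sum>(y, z)\<in>E. edge_jump y z (F y z) - edge_jump y z (G y z))"
    using jump_term_eq_sum_edges[OF F] jump_term_eq_sum_edges[of G Bd] G
    by (simp add: sum_subtractf case_prod_unfold close_def borel_measurable_continuous_onI)
  also have "\<dots> \<le> (\<Sum>(y, z)\<in>E. \<eta> * k)"
    using G by (intro sum_mono) (auto simp: close_def algebra_simps)
  also have "\<dots> = \<epsilon> * (card E / (card E + 1))"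
    unfolding \<eta>_def using k by simp
  also have "\<dots> \<le> \<epsilon>" using \<epsilon> by (intro mult_left_le) auto
  finally have "jump_term F \<le> jump_term G + \<epsilon>" by simp
  moreover have "cont_edge T0 E G" using G unfolding cont_edge_def close_def by auto
  ultimately show ?thesis using that by blast
qed

lemma jump_term_le_I_sup:
  assumes ac: "abs_cont_prob T0 \<mu>"
    and F: "\<And>y z. (y, z) \<in> E \<Longrightarrow> F y z \<in> borel_measurable borel"
      "\<And>y z t. (y, z) \<in> E \<Longrightarrow> t \<in> {0..<T0} \<Longrightarrow> \<bar>F y z t\<bar> \<le> Bd"
  shows "ereal (jump_term F) \<le> I_sup"
proof (rule ereal_le_epsilon2)
  fix \<epsilon> :: real assume \<epsilon>: "\<epsilon> > 0"
  obtain G where G: "cont_edge T0 E G" "jump_term F \<le> jump_term G + \<epsilon>"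
    by (rule jump_term_continuous_approx[where F=F and Bd=Bd and \<epsilon>=\<epsilon>]) (use F \<epsilon> in auto)
  have "ereal (jump_term F) \<le> ereal (jump_term G) + ereal \<epsilon>" using G(2) by simp
  also have "ereal (jump_term G) \<le> I_sup"
    using Iphi_le_I_sup[OF C1_time_zero G(1)] ac
    by (simp add: Iphi_def Ihat_eq continuity_residual_def)
  finally show "ereal (jump_term F) \<le> I_sup + ereal \<epsilon>" by (simp add: add_right_mono)
qed


definition has_densities :: "('v \<Rightarrow> real \<Rightarrow> real) \<Rightarrow> ('v \<Rightarrow> 'v \<Rightarrow> real \<Rightarrow> real) \<Rightarrow> bool" where
  "has_densities m q \<longleftrightarrow> mu_density T0 \<mu> m \<and>
     (\<forall>(y, z)\<in>E. q y z \<in> borel_measurable lborel \<and> (\<forall>t. 0 \<le> q y z t) \<and>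
          Q y z = density (circ T0) (\<lambda>t. ennreal (q y z t)))"

definition rate_integral :: "('v \<Rightarrow> real \<Rightarrow> real) \<Rightarrow> ('v \<Rightarrow> 'v \<Rightarrow> real \<Rightarrow> real) \<Rightarrow> ereal" where
  "rate_integral m q =
     enn2ereal (\<integral>\<^sup>+ t\<in>{0..<T0}. (\<Sum>(y, z)\<in>E. Phi (q y z t) (m y t * r y z t)) \<partial>lborel)"

lemma has_densities_if_Lambda_dens: "Lambda_dens T0 E \<mu> Q m q \<Longrightarrow> has_densities m q"
  unfolding Lambda_dens_def has_densities_def by blast

lemma abs_cont_prob_if_has_densities: "has_densities m q \<Longrightarrow> abs_cont_prob T0 \<mu>"
  unfolding has_densities_def abs_cont_prob_def by blast

context
  fixes m q assumes dens: "has_densities m q"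
begin

lemma m_measurable: "m y \<in> borel_measurable borel" and m_nonneg: "0 \<le> m y t"
  and mu_eq_density: "\<mu> y = density (circ T0) (\<lambda>t. ennreal (m y t))"
  using dens unfolding has_densities_def mu_density_def by (auto simp: measurable_lborel2)

lemma q_measurable: "(y, z) \<in> E \<Longrightarrow> q y z \<in> borel_measurable borel"
  and q_nonneg: "(y, z) \<in> E \<Longrightarrow> 0 \<le> q y z t"
  and Q_eq_density: "(y, z) \<in> E \<Longrightarrow> Q y z = density (circ T0) (\<lambda>t. ennreal (q y z t))"
  using dens unfolding has_densities_def by (auto simp: measurable_lborel2)

lemma integrable_m: "integrable (circ T0) (m y)"
  using finite_measure_mu[of y] mu_eq_density[of y]
  by (intro integrable_density_finite borel_measurable_circ m_measurable m_nonneg) auto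

lemma integrable_q: "(y, z) \<in> E \<Longrightarrow> integrable (circ T0) (q y z)"
  using finite_measure_Q[of y z] Q_eq_density[of y z]
  by (intro integrable_density_finite borel_measurable_circ q_measurable q_nonneg) auto

lemma integral_mu_eq:
  "g \<in> borel_measurable borel \<Longrightarrow> integral\<^sup>L (\<mu> y) g = (\<integral>t. m y t * g t \<partial>circ T0)"
  by (subst mu_eq_density) (intro integral_real_density borel_measurable_circ m_measurable AE_I2 m_nonneg refl)

lemma integral_Q_eq:
  "(y, z) \<in> E \<Longrightarrow> g \<in> borel_measurable borel \<Longrightarrow> integral\<^sup>L (Q y z) g = (\<integral>t. q y z t * g t \<partial>circ T0)"
  by (subst Q_eq_density) (auto intro!: integral_real_density borel_measurable_circ AE_I2 q_nonneg q_measurable)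

lemma edge_jump_eq_integral:
  assumes e: "(y, z) \<in> E" and [measurable]: "f \<in> borel_measurable borel"
    and f: "\<And>t. t \<in> {0..<T0} \<Longrightarrow> \<bar>f t\<bar> \<le> Bd"
  shows "integrable (circ T0) (\<lambda>t. Phi_var (q y z t) (m y t * r y z t) (f t))"
    "edge_jump y z f = (\<integral>t. Phi_var (q y z t) (m y t * r y z t) (f t) \<partial>circ T0)"
proof -
  note [measurable] = r_measurable[of y z] q_measurable[OF e] m_measurable[of y]
  have i1: "integrable (circ T0) (\<lambda>t. q y z t * f t)"
    using f by (intro integrable_mult_bounded[OF integrable_q[OF e]] borel_measurable_circ) (auto simp: space_circ)
  have i2: "integrable (circ T0) (\<lambda>t. m y t * (r y z t * (exp (f t) - 1)))"
  proof (intro integrable_mult_bounded[OF integrable_m] borel_measurable_circ)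
    show "(\<lambda>t. r y z t * (exp (f t) - 1)) \<in> borel_measurable borel" by measurable
    fix t assume "t \<in> space (circ T0)"
    then have t: "t \<in> {0..<T0}" by (simp add: space_circ)
    have "\<bar>r y z t * (exp (f t) - 1)\<bar> = r y z t * \<bar>exp (f t) - 1\<bar>" using r_nonneg by (simp add: abs_mult)
    also have "\<dots> \<le> C * (exp Bd + 1)"
      using r_le[OF e t] r_nonneg abs_exp_minus_one_le[of "f t" Bd] f[OF t] C_nonneg
      by (intro mult_mono) auto
    finally show "\<bar>r y z t * (exp (f t) - 1)\<bar> \<le> C * (exp Bd + 1)" .
  qed
  have Phi_var_eq: "Phi_var (q y z t) (m y t * r y z t) (f t) = q y z t * f t - m y t * (r y z t * (exp (f t) - 1))" for t
    by (simp add: Phi_var_def algebra_simps)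
  show "integrable (circ T0) (\<lambda>t. Phi_var (q y z t) (m y t * r y z t) (f t))"
    unfolding Phi_var_eq using i1 i2 by auto
  have "edge_jump y z f = (\<integral>t. q y z t * f t \<partial>circ T0) - (\<integral>t. m y t * (r y z t * (exp (f t) - 1)) \<partial>circ T0)"
    unfolding edge_jump_def by (subst integral_Q_eq[OF e], measurable, subst integral_mu_eq, measurable)
  also have "\<dots> = (\<integral>t. Phi_var (q y z t) (m y t * r y z t) (f t) \<partial>circ T0)"
    unfolding Phi_var_eq using i1 i2 by simp
  finally show "edge_jump y z f = (\<integral>t. Phi_var (q y z t) (m y t * r y z t) (f t) \<partial>circ T0)" .
qed

lemma jump_term_eq_integral:
  assumes F: "\<And>y z. (y, z) \<in> E \<Longrightarrow> F y z \<in> borel_measurable borel"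
      "\<And>y z t. (y, z) \<in> E \<Longrightarrow> t \<in> {0..<T0} \<Longrightarrow> \<bar>F y z t\<bar> \<le> Bd"
  shows "integrable (circ T0) (\<lambda>t. \<Sum>(y, z)\<in>E. Phi_var (q y z t) (m y t * r y z t) (F y z t))"
    "jump_term F = (\<integral>t. (\<Sum>(y, z)\<in>E. Phi_var (q y z t) (m y t * r y z t) (F y z t)) \<partial>circ T0)"
proof -
  have ie: "integrable (circ T0) (\<lambda>t. Phi_var (q y z t) (m y t * r y z t) (F y z t))" if "(y, z) \<in> E" for y z
    using edge_jump_eq_integral(1)[OF that F(1)[OF that] F(2)[OF that]] .
  then show "integrable (circ T0) (\<lambda>t. \<Sum>(y, z)\<in>E. Phi_var (q y z t) (m y t * r y z t) (F y z t))"
    unfolding case_prod_unfold by (intro Bochner_Integration.integrable_sum) auto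
  have "jump_term F = (\<Sum>(y, z)\<in>E. edge_jump y z (F y z))"
    by (rule jump_term_eq_sum_edges) (fact F)+
  also have "\<dots> = (\<Sum>(y, z)\<in>E. \<integral>t. Phi_var (q y z t) (m y t * r y z t) (F y z t) \<partial>circ T0)"
  proof (intro sum.cong refl, clarify)
    fix y z assume e: "(y, z) \<in> E"
    show "edge_jump y z (F y z) = (\<integral>t. Phi_var (q y z t) (m y t * r y z t) (F y z t) \<partial>circ T0)"
      by (rule edge_jump_eq_integral(2)[OF e F(1)[OF e] F(2)[OF e]])
  qed
  also have "\<dots> = (\<integral>t. (\<Sum>(y, z)\<in>E. Phi_var (q y z t) (m y t * r y z t) (F y z t)) \<partial>circ T0)"
    unfolding case_prod_unfold using ie by (intro Bochner_Integration.integral_sum[symmetric]) auto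
  finally show "jump_term F = (\<integral>t. (\<Sum>(y, z)\<in>E. Phi_var (q y z t) (m y t * r y z t) (F y z t)) \<partial>circ T0)" .
qed

lemma sum_integral_deriv_eq:
  assumes \<phi>: "C1_time T0 \<phi>"
  shows "(\<Sum>y\<in>UNIV. \<integral>s. deriv (\<phi> y) s \<partial>(\<mu> y))
    = (\<integral>s\<in>{0..<T0}. (\<Sum>y\<in>UNIV. m y s * deriv (\<phi> y) s) \<partial>lborel)"
proof -
  have "\<exists>B. \<forall>t\<in>{0..<T0}. \<bar>deriv (\<phi> y) t\<bar> \<le> B" for y
    by (rule C1_timeE[OF \<phi>, of y], erule continuous_bounded_on_period) blast
  then obtain B where B: "\<And>y t. t \<in> {0..<T0} \<Longrightarrow> \<bar>deriv (\<phi> y) t\<bar> \<le> B y" by metis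
  have [measurable]: "deriv (\<phi> y) \<in> borel_measurable borel" for y
    using C1_timeE[OF \<phi>, of y] by (auto intro: borel_measurable_continuous_onI)
  have "(\<Sum>y\<in>UNIV. \<integral>s. deriv (\<phi> y) s \<partial>(\<mu> y)) = (\<Sum>y\<in>UNIV. \<integral>s. m y s * deriv (\<phi> y) s \<partial>circ T0)"
    by (intro sum.cong refl integral_mu_eq) measurable
  also have "\<dots> = (\<integral>s. (\<Sum>y\<in>UNIV. m y s * deriv (\<phi> y) s) \<partial>circ T0)"
    using B by (intro Bochner_Integration.integral_sum[symmetric] integrable_mult_bounded[OF integrable_m]
        borel_measurable_circ) (auto simp: space_circ)
  finally show ?thesis by (simp add: integral_circ)
qed

lemma sum_integral_gradient_eq:
  assumes \<phi>: "C1_time T0 \<phi>"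
  shows "(\<Sum>(y, z)\<in>E. \<integral>s. (\<phi> y s - \<phi> z s) \<partial>(Q y z))
    = (\<integral>s\<in>{0..<T0}. (\<Sum>y\<in>UNIV. ((\<Sum>z\<in>{z. (y, z) \<in> E}. q y z s)
                                - (\<Sum>z\<in>{z. (z, y) \<in> E}. q z y s)) * \<phi> y s) \<partial>lborel)"
proof -
  have "\<exists>B. \<forall>t\<in>{0..<T0}. \<bar>\<phi> y t\<bar> \<le> B" for y
    by (rule C1_timeE[OF \<phi>, of y], erule continuous_bounded_on_period) blast
  then obtain B where B: "\<And>y t. t \<in> {0..<T0} \<Longrightarrow> \<bar>\<phi> y t\<bar> \<le> B y" by metis
  have [measurable]: "\<phi> y \<in> borel_measurable borel" for y
    using C1_timeE[OF \<phi>, of y] by (auto intro: borel_measurable_continuous_onI)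
  have integrable: "integrable (circ T0) (\<lambda>s. q y z s * (\<phi> y s - \<phi> z s))" if e: "(y, z) \<in> E" for y z
  proof (intro integrable_mult_bounded[OF integrable_q[OF e]] borel_measurable_circ)
    fix t assume "t \<in> space (circ T0)"
    then have "\<bar>\<phi> y t\<bar> \<le> B y" "\<bar>\<phi> z t\<bar> \<le> B z" using B by (auto simp: space_circ)
    then show "\<bar>\<phi> y t - \<phi> z t\<bar> \<le> B y + B z" by linarith
  qed (auto simp: space_circ)
  have "(\<Sum>(y, z)\<in>E. \<integral>s. (\<phi> y s - \<phi> z s) \<partial>(Q y z)) = (\<Sum>(y, z)\<in>E. \<integral>s. q y z s * (\<phi> y s - \<phi> z s) \<partial>circ T0)"
    by (intro sum.cong refl) (auto intro!: integral_Q_eq)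
  also have "\<dots> = (\<integral>s. (\<Sum>(y, z)\<in>E. q y z s * (\<phi> y s - \<phi> z s)) \<partial>circ T0)"
    unfolding case_prod_unfold using integrable by (intro Bochner_Integration.integral_sum[symmetric]) auto
  also have "\<dots> = (\<integral>s. (\<Sum>y\<in>UNIV. ((\<Sum>z\<in>{z. (y, z) \<in> E}. q y z s)
                                    - (\<Sum>z\<in>{z. (z, y) \<in> E}. q z y s)) * \<phi> y s) \<partial>circ T0)"
    by (intro Bochner_Integration.integral_cong refl sum_edges_gradient_eq_divergence)
  finally show ?thesis by (simp add: integral_circ)
qed

lemma continuity_residual_eq:
  assumes "C1_time T0 \<phi>"
  shows "continuity_residual \<phi> = - ((\<integral>s\<in>{0..<T0}. (\<Sum>y\<in>UNIV. m y s * deriv (\<phi> y) s) \<partial>lborel) -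
        (\<integral>s\<in>{0..<T0}. (\<Sum>y\<in>UNIV. ((\<Sum>z\<in>{z. (y, z) \<in> E}. q y z s)
                                    - (\<Sum>z\<in>{z. (z, y) \<in> E}. q z y s)) * \<phi> y s) \<partial>lborel))"
  unfolding continuity_residual_def sum_integral_deriv_eq[OF assms] sum_integral_gradient_eq[OF assms]
  by simp

end


lemma jump_term_le_rate_integral:
  assumes dens: "has_densities m q" and F: "cont_edge T0 E F"
  shows "ereal (jump_term F) \<le> rate_integral m q"
proof -
  have Fc: "continuous_on UNIV (F y z)" if "(y, z) \<in> E" for y z
    using F that unfolding cont_edge_def by auto
  have "\<exists>B. \<forall>t\<in>{0..<T0}. \<bar>F y z t\<bar> \<le> B" if "(y, z) \<in> E" for y z
    by (rule continuous_bounded_on_period[OF Fc[OF that]]) blast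
  then obtain B where B: "\<And>y z t. (y, z) \<in> E \<Longrightarrow> t \<in> {0..<T0} \<Longrightarrow> \<bar>F y z t\<bar> \<le> B y z"
    by metis
  define Bd where "Bd = (\<Sum>(y, z)\<in>E. \<bar>B y z\<bar>)"
  have F_bound: "\<bar>F y z t\<bar> \<le> Bd" if "(y, z) \<in> E" "t \<in> {0..<T0}" for y z t
    using B[OF that] member_le_sum[OF that(1), of "\<lambda>(y, z). \<bar>B y z\<bar>"] unfolding Bd_def by auto
  have F_meas: "F y z \<in> borel_measurable borel" if "(y, z) \<in> E" for y z
    using Fc[OF that] by (rule borel_measurable_continuous_onI)
  let ?g = "\<lambda>t. \<Sum>(y, z)\<in>E. Phi_var (q y z t) (m y t * r y z t) (F y z t)"
  have "ereal (jump_term F) = ereal (\<integral>t. ?g t \<partial>circ T0)"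
    using jump_term_eq_integral(2)[OF dens F_meas F_bound] by simp
  also have "\<dots> \<le> enn2ereal (\<integral>\<^sup>+t. ennreal (?g t) \<partial>circ T0)"
    by (rule integral_le_nn_integral[OF jump_term_eq_integral(1)[OF dens F_meas F_bound]])
  also have "\<dots> \<le> enn2ereal (\<integral>\<^sup>+t. (\<Sum>(y, z)\<in>E. Phi (q y z t) (m y t * r y z t)) \<partial>circ T0)"
  proof -
    have "ennreal (?g t) \<le> (\<Sum>(y, z)\<in>E. Phi (q y z t) (m y t * r y z t))" for t
    proof -
      have "ennreal (?g t) \<le> (\<Sum>(y, z)\<in>E. ennreal (Phi_var (q y z t) (m y t * r y z t) (F y z t)))"
        unfolding case_prod_unfold by (rule ennreal_sum_le_sum_ennreal[OF finite_E])
      also have "\<dots> \<le> (\<Sum>(y, z)\<in>E. Phi (q y z t) (m y t * r y z t))"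
        using q_nonneg[OF dens] m_nonneg[OF dens] r_nonneg
        by (intro sum_mono) (auto intro!: Phi_var_le_Phi)
      finally show ?thesis .
    qed
    then show ?thesis by (simp add: nn_integral_mono less_eq_ennreal.rep_eq[symmetric])
  qed
  also have "\<dots> = rate_integral m q" unfolding rate_integral_def by (simp add: nn_integral_circ)
  finally show ?thesis .
qed

lemma I_sup_le_rate_integral:
  assumes L: "Lambda_dens T0 E \<mu> Q m q"
  shows "I_sup \<le> rate_integral m q"
proof (rule SUP_least, clarify)
  fix \<phi> :: "'v \<Rightarrow> real \<Rightarrow> real" and F assume \<phi>: "C1_time T0 \<phi>" and F: "cont_edge T0 E F"
  have dens: "has_densities m q" using L by (rule has_densities_if_Lambda_dens)
  have "continuity_residual \<phi> = 0"
    using L \<phi> continuity_residual_eq[OF dens \<phi>] unfolding Lambda_dens_def by simp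
  then show "Iphi T0 r \<phi> F \<mu> Q \<le> rate_integral m q"
    using jump_term_le_rate_integral[OF dens F] abs_cont_prob_if_has_densities[OF dens]
    by (simp add: Iphi_def Ihat_eq)
qed

definition truncated_optimal_jump :: "nat \<Rightarrow> ('v \<Rightarrow> real \<Rightarrow> real) \<Rightarrow> ('v \<Rightarrow> 'v \<Rightarrow> real \<Rightarrow> real)
    \<Rightarrow> 'v \<Rightarrow> 'v \<Rightarrow> real \<Rightarrow> real" where
  "truncated_optimal_jump n m q y z t = Phi_maximizer n (q y z t) (m y t * r y z t)"

lemma rate_integral_eq_SUP_jump_term:
  assumes dens: "has_densities m q"
  shows "rate_integral m q = enn2ereal (SUP n. ennreal (jump_term (truncated_optimal_jump n m q)))"
proof -
  let ?F = "\<lambda>n. truncated_optimal_jump n m q"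
  have F_meas: "?F n y z \<in> borel_measurable borel" if "(y, z) \<in> E" for n y z
  proof -
    note [measurable] = q_measurable[OF dens that] m_measurable[OF dens, of y] r_measurable[of y z]
    show ?thesis unfolding truncated_optimal_jump_def Phi_maximizer_def by measurable
  qed
  have F_bound: "\<bar>?F n y z t\<bar> \<le> real n" for n y z t
    unfolding truncated_optimal_jump_def by (rule abs_Phi_maximizer_le)
  define K where "K n t = (\<Sum>(y, z)\<in>E. Phi_var (q y z t) (m y t * r y z t) (?F n y z t))" for n t
  have args: "0 \<le> q y z t" "0 \<le> m y t * r y z t" if "(y, z) \<in> E" for y z t
    using q_nonneg[OF dens that] m_nonneg[OF dens] r_nonneg by auto
  have K_int: "integrable (circ T0) (K n)" and jump_eq: "jump_term (?F n) = (\<integral>t. K n t \<partial>circ T0)" for n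
    unfolding K_def[abs_def] using jump_term_eq_integral[OF dens F_meas F_bound] by auto
  have K_nonneg: "0 \<le> K n t" for n t
    unfolding K_def truncated_optimal_jump_def case_prod_unfold using args
    by (intro sum_nonneg Phi_var_maximizer_nonneg) auto
  have K_ennreal: "ennreal (K n t) = (\<Sum>(y, z)\<in>E. ennreal (Phi_var (q y z t) (m y t * r y z t) (?F n y z t)))" for n t
    unfolding K_def case_prod_unfold truncated_optimal_jump_def using args
    by (subst sum_ennreal) (auto intro: Phi_var_maximizer_nonneg)
  have inc: "incseq (\<lambda>n t. ennreal (K n t))"
    unfolding K_def truncated_optimal_jump_def case_prod_unfold using args
    by (intro incseq_SucI le_funI ennreal_leI sum_mono Phi_var_maximizer_mono) auto
  have "(\<lambda>n. ennreal (K n t)) \<longlonglongrightarrow> (\<Sum>(y, z)\<in>E. Phi (q y z t) (m y t * r y z t))" for t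
    unfolding K_ennreal case_prod_unfold truncated_optimal_jump_def using args
    by (intro tendsto_sum Phi_var_maximizer_tendsto) auto
  moreover have "(\<lambda>n. ennreal (K n t)) \<longlonglongrightarrow> (SUP n. ennreal (K n t))" for t
    using inc by (intro LIMSEQ_SUP) (auto simp: incseq_def le_fun_def)
  ultimately have SUP_eq: "(SUP n. ennreal (K n t)) = (\<Sum>(y, z)\<in>E. Phi (q y z t) (m y t * r y z t))" for t
    using LIMSEQ_unique by blast
  have "(\<integral>\<^sup>+t. (\<Sum>(y, z)\<in>E. Phi (q y z t) (m y t * r y z t)) \<partial>circ T0)
      = (SUP n. \<integral>\<^sup>+t. ennreal (K n t) \<partial>circ T0)"
    unfolding SUP_eq[symmetric] using K_int
    by (intro nn_integral_monotone_convergence_SUP inc) (auto intro: measurable_compose[OF _ measurable_ennreal])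
  also have "\<dots> = (SUP n. ennreal (jump_term (?F n)))"
    unfolding jump_eq using K_int K_nonneg by (simp add: nn_integral_eq_integral)
  finally show ?thesis unfolding rate_integral_def by (simp add: nn_integral_circ)
qed

lemma rate_integral_le_I_sup:
  assumes dens: "has_densities m q"
  shows "rate_integral m q \<le> I_sup"
proof -
  have ac: "abs_cont_prob T0 \<mu>" using dens by (rule abs_cont_prob_if_has_densities)
  have "enn2ereal (ennreal (jump_term (truncated_optimal_jump n m q))) \<le> I_sup" for n
  proof (cases "jump_term (truncated_optimal_jump n m q) \<ge> 0")
    case True
    have "ereal (jump_term (truncated_optimal_jump n m q)) \<le> I_sup"
    proof (rule jump_term_le_I_sup[OF ac])
      fix y z assume e: "(y, z) \<in> E"
      note [measurable] = q_measurable[OF dens e] m_measurable[OF dens, of y] r_measurable[of y z]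
      show "truncated_optimal_jump n m q y z \<in> borel_measurable borel"
        unfolding truncated_optimal_jump_def Phi_maximizer_def by measurable
      show "\<bar>truncated_optimal_jump n m q y z t\<bar> \<le> real n" for t
        unfolding truncated_optimal_jump_def by (rule abs_Phi_maximizer_le)
    qed
    then show ?thesis using True by (simp add: enn2ereal_ennreal)
  qed (use I_sup_nonneg[OF ac] in \<open>simp add: ennreal_neg zero_ennreal.rep_eq\<close>)
  then have "(SUP n. enn2ereal (ennreal (jump_term (truncated_optimal_jump n m q)))) \<le> I_sup"
    by (rule SUP_least)
  then show ?thesis
    unfolding rate_integral_eq_SUP_jump_term[OF dens]
    using I_sup_nonneg[OF ac] by (simp add: Sup_ennreal.rep_eq image_image)
qed

lemma jump_term_single_edge_indicator:
  assumes e: "(y, z) \<in> E" and N: "N \<in> sets (circ T0)" and null: "emeasure (\<mu> y) N = 0"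
  shows "jump_term (\<lambda>a b t. if (a, b) = (y, z) then K * indicator N t else 0) = K * measure (Q y z) N"
proof -
  let ?F = "\<lambda>a b t. if (a, b) = (y, z) then K * indicator N t else (0::real)"
  have "(\<integral>s. K * indicator N s \<partial>(Q y z)) = K * measure (Q y z) N"
    using N sets_Q[OF e] space_Q[OF e] by (simp add: Int_absorb2 sets_circ_iff)
  then have "(case x of (a, b) \<Rightarrow> \<integral>s. ?F a b s \<partial>(Q a b)) = (if x = (y, z) then K * measure (Q y z) N else 0)"
    for x by (cases x) auto
  then have Q_part: "(\<Sum>(a, b)\<in>E. \<integral>s. ?F a b s \<partial>(Q a b)) = K * measure (Q y z) N"
    using e finite_E by (simp add: sum.delta')
  have "AE s in \<mu> a. (\<Sum>b\<in>{b. (a, b) \<in> E}. r a b s * (exp (?F a b s) - 1)) = 0" for a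
  proof -
    have "N \<in> null_sets (\<mu> y)" using null N sets_mu by auto
    then have "AE s in \<mu> a. s \<notin> N \<or> a \<noteq> y" by (cases "a = y") (auto dest: AE_not_in)
    then show ?thesis by eventually_elim (auto intro!: sum.neutral)
  qed
  then have "(\<integral>s. (\<Sum>b\<in>{b. (a, b) \<in> E}. r a b s * (exp (?F a b s) - 1)) \<partial>(\<mu> a)) = 0" for a
    by (rule integral_eq_zero_AE)
  then show ?thesis unfolding jump_term_def Q_part by simp
qed

text \<open>Where \<open>Q y z\<close> charges a \<open>\<mu> y\<close>-null set \<open>N\<close>, the test function \<open>K \<one>\<^sub>N\<close> on that edge
  gains \<open>K Q(N)\<close> at no cost.\<close>
lemma I_sup_infinite_if_singular:
  assumes ac: "abs_cont_prob T0 \<mu>" and e: "(y, z) \<in> E" and N: "N \<in> sets (circ T0)"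
    and null: "emeasure (\<mu> y) N = 0" and pos: "emeasure (Q y z) N \<noteq> 0"
  shows "I_sup = \<infinity>"
proof (rule ereal_top)
  fix B :: real
  define mQ where "mQ = measure (Q y z) N"
  have "mQ > 0"
    using pos finite_measure.emeasure_eq_measure[OF finite_measure_Q[OF e]] unfolding mQ_def
    by (simp add: less_le)
  define K where "K = max 0 (B / mQ)"
  have "B / mQ \<le> K" unfolding K_def by simp
  then have "B \<le> K * mQ" using \<open>mQ > 0\<close> by (simp add: divide_le_eq)
  also have "\<dots> = jump_term (\<lambda>a b t. if (a, b) = (y, z) then K * indicator N t else 0)"
    unfolding mQ_def by (rule jump_term_single_edge_indicator[OF e N null, symmetric])
  finally have "ereal B \<le> ereal (jump_term (\<lambda>a b t. if (a, b) = (y, z) then K * indicator N t else 0))"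
    by simp
  also have "\<dots> \<le> I_sup"
  proof (rule jump_term_le_I_sup[OF ac])
    have "N \<in> sets borel" using N by (simp add: sets_circ_iff)
    then show "(\<lambda>t. if (a, b) = (y, z) then K * indicator N t else 0) \<in> borel_measurable borel" for a b
      by simp
    show "\<bar>if (a, b) = (y, z) then K * indicator N t else 0\<bar> \<le> K" for a b t
      unfolding K_def by (auto simp: indicator_def)
  qed
  finally show "ereal B \<le> I_sup" .
qed

lemma Q_density_exists:
  assumes m: "mu_density T0 \<mu> m" and e: "(y, z) \<in> E"
    and abs: "\<And>N. N \<in> sets (circ T0) \<Longrightarrow> emeasure (\<mu> y) N = 0 \<Longrightarrow> emeasure (Q y z) N = 0"
  obtains d where "d \<in> borel_measurable lborel" "\<And>t. 0 \<le> d t" "Q y z = density (circ T0) (\<lambda>t. ennreal (d t))"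
proof -
  interpret circ: finite_measure "circ T0" by (rule finite_measure_circ)
  have "m y \<in> borel_measurable borel" and mu_eq: "\<mu> y = density (circ T0) (\<lambda>t. ennreal (m y t))"
    using m unfolding mu_density_def by (auto simp: measurable_lborel2)
  then have "absolutely_continuous (circ T0) (\<mu> y)"
    unfolding mu_eq
    by (intro absolutely_continuousI_density measurable_compose[OF _ measurable_ennreal] borel_measurable_circ)
  then have ac: "absolutely_continuous (circ T0) (Q y z)"
    using abs sets_Q[OF e] unfolding absolutely_continuous_def by (auto simp: null_sets_def)
  obtain D where D: "D \<in> borel_measurable (circ T0)" "AE t in circ T0. RN_deriv (circ T0) (Q y z) t = ennreal (D t)"
      "\<And>t. 0 \<le> D t"
    using circ.real_RN_deriv[OF finite_measure_Q[OF e] ac sets_Q[OF e]] by blast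
  have "Q y z = density (circ T0) (RN_deriv (circ T0) (Q y z))"
    using circ.density_RN_deriv[OF ac sets_Q[OF e]] by simp
  also have "\<dots> = density (circ T0) (\<lambda>t. ennreal (D t))"
    using D by (intro density_cong) auto
  finally have Q_eq: "Q y z = density (circ T0) (\<lambda>t. ennreal (D t))" .
  define d where "d t = (if t \<in> {0..<T0} then D t else 0)" for t
  have d_meas: "d \<in> borel_measurable lborel"
    using D(1) unfolding circ_def d_def by (subst measurable_restrict_space_iff[symmetric]) auto
  have "density (circ T0) (\<lambda>t. ennreal (D t)) = density (circ T0) (\<lambda>t. ennreal (d t))"
  proof (rule density_cong)
    show "(\<lambda>t. ennreal (D t)) \<in> borel_measurable (circ T0)"
      using D(1) by (rule measurable_compose[OF _ measurable_ennreal])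
    show "(\<lambda>t. ennreal (d t)) \<in> borel_measurable (circ T0)"
      using d_meas by (intro measurable_compose[OF _ measurable_ennreal] borel_measurable_circ)
        (simp add: measurable_lborel2)
  qed (auto intro!: AE_I2 simp: d_def space_circ)
  then show ?thesis using that d_meas D(3) Q_eq unfolding d_def by auto
qed

lemma support_condition:
  assumes dens: "has_densities m q" and e: "(y, z) \<in> E"
    and abs: "\<And>N. N \<in> sets (circ T0) \<Longrightarrow> emeasure (\<mu> y) N = 0 \<Longrightarrow> emeasure (Q y z) N = 0"
  shows "AE t in circ T0. m y t = 0 \<longrightarrow> q y z t = 0"
proof -
  note [measurable] = m_measurable[OF dens, of y] q_measurable[OF dens e]
  define N where "N = {t \<in> {0..<T0}. m y t = 0 \<and> q y z t \<noteq> 0}"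
  have N_borel: "N \<in> sets borel" unfolding N_def by measurable
  then have N: "N \<in> sets (circ T0)" by (auto simp: sets_circ_iff N_def)
  have "emeasure (\<mu> y) N = (\<integral>\<^sup>+t. ennreal (m y t) * indicator N t \<partial>circ T0)"
    by (subst mu_eq_density[OF dens])
      (intro emeasure_density N measurable_compose[OF _ measurable_ennreal] borel_measurable_circ, measurable)
  also have "\<dots> = (\<integral>\<^sup>+t. 0 \<partial>circ T0)" by (intro nn_integral_cong) (auto simp: N_def indicator_def)
  finally have "emeasure (Q y z) N = 0" using abs[OF N] by simp
  moreover have "emeasure (Q y z) N = (\<integral>\<^sup>+t. ennreal (q y z t) * indicator N t \<partial>circ T0)"
    by (subst Q_eq_density[OF dens e])
      (intro emeasure_density N measurable_compose[OF _ measurable_ennreal] borel_measurable_circ, measurable)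
  ultimately have "AE t in circ T0. ennreal (q y z t) * indicator N t = 0"
    using N_borel by (subst nn_integral_0_iff_AE[symmetric]) (auto intro!: borel_measurable_circ)
  then show ?thesis
    using AE_space by eventually_elim
      (use q_nonneg[OF dens e] in \<open>auto simp: N_def indicator_def space_circ split: if_splits\<close>)
qed

lemma I_sup_infinite_if_residual:
  assumes ac: "abs_cont_prob T0 \<mu>" and \<phi>: "C1_time T0 \<phi>" and res: "continuity_residual \<phi> \<noteq> 0"
  shows "I_sup = \<infinity>"
proof (rule ereal_top)
  fix B :: real
  define c where "c = B / continuity_residual \<phi>"
  have "Iphi T0 r (\<lambda>y t. c * \<phi> y t) (\<lambda>y z t. 0) \<mu> Q = ereal (c * continuity_residual \<phi>)"
    using ac by (simp add: Iphi_def Ihat_eq continuity_residual_cmult[OF \<phi>] jump_term_def)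
  then have "ereal B = Iphi T0 r (\<lambda>y t. c * \<phi> y t) (\<lambda>y z t. 0) \<mu> Q"
    using res by (simp add: c_def)
  also have "\<dots> \<le> I_sup"
    by (rule Iphi_le_I_sup[OF C1_time_cmult[OF \<phi>]]) (simp add: cont_edge_def periodic_fun_def)
  finally show "ereal B \<le> I_sup" by simp
qed

lemma I_sup_infinite_if_not_Lambda:
  assumes ac: "abs_cont_prob T0 \<mu>" and nL: "\<not> (\<exists>m q. Lambda_dens T0 E \<mu> Q m q)"
    and abs: "\<And>y z N. (y, z) \<in> E \<Longrightarrow> N \<in> sets (circ T0) \<Longrightarrow> emeasure (\<mu> y) N = 0 \<Longrightarrow> emeasure (Q y z) N = 0"
  shows "I_sup = \<infinity>"
proof -
  obtain m where m: "mu_density T0 \<mu> m" using ac unfolding abs_cont_prob_def by blast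
  define is_density where "is_density e d \<longleftrightarrow> d \<in> borel_measurable lborel \<and> (\<forall>t. 0 \<le> d t) \<and>
      Q (fst e) (snd e) = density (circ T0) (\<lambda>t. ennreal (d t))" for e d
  have "\<exists>d. is_density (y, z) d" if e: "(y, z) \<in> E" for y z
    by (rule Q_density_exists[OF m e abs[OF e]]) (auto simp: is_density_def)
  then have "\<forall>e. \<exists>d. e \<in> E \<longrightarrow> is_density e d" by auto
  from choice[OF this] obtain d where d: "\<And>e. e \<in> E \<Longrightarrow> is_density e (d e)" by blast
  define q where "q y z = d (y, z)" for y z
  have dens: "has_densities m q"
    using m d unfolding has_densities_def is_density_def q_def by auto
  have "AE t in lborel. \<forall>e\<in>E. t \<in> {0..<T0} \<longrightarrow> (m (fst e) t = 0 \<longrightarrow> q (fst e) (snd e) t = 0)"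
  proof (rule AE_finite_allI[OF finite_E])
    fix e assume e: "e \<in> E"
    have "AE t in circ T0. m (fst e) t = 0 \<longrightarrow> q (fst e) (snd e) t = 0"
      using e by (intro support_condition[OF dens] abs) auto
    then show "AE t in lborel. t \<in> {0..<T0} \<longrightarrow> (m (fst e) t = 0 \<longrightarrow> q (fst e) (snd e) t = 0)"
      unfolding circ_def by (subst (asm) AE_restrict_space_iff) auto
  qed
  then have support: "AE t in lborel. t \<in> {0..<T0} \<longrightarrow> (\<forall>(y, z)\<in>E. m y t = 0 \<longrightarrow> q y z t = 0)"
    by eventually_elim auto
  obtain \<phi> where \<phi>: "C1_time T0 \<phi>"
    and "(\<integral>s\<in>{0..<T0}. (\<Sum>y\<in>UNIV. m y s * deriv (\<phi> y) s) \<partial>lborel) \<noteq>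
        (\<integral>s\<in>{0..<T0}. (\<Sum>y\<in>UNIV. ((\<Sum>z\<in>{z. (y, z) \<in> E}. q y z s)
                                    - (\<Sum>z\<in>{z. (z, y) \<in> E}. q z y s)) * \<phi> y s) \<partial>lborel)"
    using nL dens support unfolding Lambda_dens_def has_densities_def by blast
  then have "continuity_residual \<phi> \<noteq> 0" using continuity_residual_eq[OF dens \<phi>] by simp
  then show ?thesis by (rule I_sup_infinite_if_residual[OF ac \<phi>])
qed

lemma I_sup_infinite_unless_Lambda:
  assumes nL: "\<not> (\<exists>m q. Lambda_dens T0 E \<mu> Q m q)"
  shows "I_sup = \<infinity>"
proof (cases "abs_cont_prob T0 \<mu>")
  case False
  then have "Iphi T0 r (\<lambda>y t. 0) (\<lambda>y z t. 0) \<mu> Q = \<infinity>" by (simp add: Iphi_def)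
  then show ?thesis
    using Iphi_le_I_sup[OF C1_time_zero, of "\<lambda>y z t. 0"] by (simp add: cont_edge_def periodic_fun_def)
next
  case ac: True
  show ?thesis
  proof (cases "\<exists>y z N. (y, z) \<in> E \<and> N \<in> sets (circ T0) \<and> emeasure (\<mu> y) N = 0 \<and> emeasure (Q y z) N \<noteq> 0")
    case True
    then show ?thesis using I_sup_infinite_if_singular[OF ac] by blast
  next
    case False
    then show ?thesis using I_sup_infinite_if_not_Lambda[OF ac nL] by blast
  qed
qed

lemma Irate_eq_rate_integral:
  assumes "\<exists>m q. Lambda_dens T0 E \<mu> Q m q"
  obtains m q where "Lambda_dens T0 E \<mu> Q m q" "Irate T0 r \<mu> Q = rate_integral m q"
proof -
  obtain m q where mq: "(SOME (m, q). Lambda_dens T0 E \<mu> Q m q) = (m, q)"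
    by (cases "SOME (m, q). Lambda_dens T0 E \<mu> Q m q")
  have "Lambda_dens T0 E \<mu> Q m q"
    using someI_ex[of "\<lambda>(m, q). Lambda_dens T0 E \<mu> Q m q"] assms mq by auto
  moreover have "Irate T0 r \<mu> Q = rate_integral m q"
    using assms mq unfolding Irate_def rate_integral_def by simp
  ultimately show ?thesis by (rule that)
qed

theorem Irate_eq_I_sup: "Irate T0 r \<mu> Q = I_sup"
proof (cases "\<exists>m q. Lambda_dens T0 E \<mu> Q m q")
  case True
  then obtain m q where L: "Lambda_dens T0 E \<mu> Q m q" and "Irate T0 r \<mu> Q = rate_integral m q"
    by (rule Irate_eq_rate_integral)
  then show ?thesis
    using I_sup_le_rate_integral[OF L] rate_integral_le_I_sup[OF has_densities_if_Lambda_dens[OF L]]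
    by simp
next
  case False
  then have "Irate T0 r \<mu> Q = \<infinity>" unfolding Irate_def by (rule if_not_P)
  also have "\<dots> = I_sup" using I_sup_infinite_unless_Lambda[OF False] by (rule sym)
  finally show ?thesis .
qed

end

theorem lemma8p4:
  fixes T0 :: real
    and r :: "'v::finite \<Rightarrow> 'v \<Rightarrow> real \<Rightarrow> real"
    and \<mu> :: "'v \<Rightarrow> real measure"
    and Q :: "'v \<Rightarrow> 'v \<Rightarrow> real measure"
  assumes T0_pos: "T0 > 0"
    and r_nonneg: "\<And>y z t. r y z t \<ge> 0"
    and r_meas: "\<And>y z. r y z \<in> borel_measurable borel"
    and r_per: "\<And>y z. periodic_fun T0 (r y z)"
    and r_diag: "\<And>x t. r x x t = 0"
    and A1: "\<And>y z. (\<exists>t>0. r y z t > 0) \<Longrightarrow> (\<forall>t>0. r y z t > 0)"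
    and A2: "\<And>y z. (y, z) \<in> (edges r)\<^sup>*"
    and A3: "\<exists>c C. 0 < c \<and> (\<forall>(y, z)\<in>edges r. \<forall>t\<in>{0..T0}. c \<le> r y z t \<and> r y z t \<le> C)"
    and A4: "{t \<in> {0..<T0}. \<exists>y z. \<not> isCont (r y z) t} \<in> null_sets lborel"
    and MQ: "Mstar T0 (edges r) \<mu> Q"
  shows "Irate T0 r \<mu> Q =
           (SUP (\<phi>, F) \<in> {(\<phi>, F). C1_time T0 \<phi> \<and> cont_edge T0 (edges r) F}. Iphi T0 r \<phi> F \<mu> Q)"
proof -
  \<comment> \<open>Only the upper rate bound of (A3) is needed.\<close>
  obtain C where "\<forall>(y, z)\<in>edges r. \<forall>t\<in>{0..T0}. r y z t \<le> C"
    using A3 by blast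
  then interpret rate_setting T0 r \<mu> Q "max C 0"
    by unfold_locales (use T0_pos r_nonneg r_meas MQ in \<open>auto simp: max.coboundedI1\<close>)
  show ?thesis by (rule Irate_eq_I_sup)
qed

end
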